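(* Let $X_0\sim\mathcal D$ be a ghost context independent of all randomness of the interaction and of Algorithm 1. Then there is a universal constant $L'>0$ such that $$\mathbb E\Big[\sum_{t=1}^T(\beta'_{t+1}-\beta'_t)H(\bar A_{t+1}(X_0))\Big]\le L'\,c_1\sqrt{m\ln(K/m)}\sqrt{\sum_{t=1}^T\mathbb E\big[H(\bar A_t(X_0))\big]}.$$
   Context: Fix integers $K\ge2$, $1\le m<K$, $d\ge1$ and a horizon $T\ge3$. Let $\mathcal A=\{A\in\{0,1\}^K:\sum_{k=1}^K(A)_k\le m\}$, where $(A)_k$ denotes the $k$-th coordinate, and let $\mathrm{conv}(\mathcal A)$ be its convex hull. Contexts are drawn i.i.d. from a distribution $\mathcal D$ on $\mathbb R^d$ with $\|X\|_2\le1$ almost surely and $\Sigma=\mathbb E[XX^\top]\succ0$; $\lambda_{\min}(\Sigma)$ is its smallest eigenvalue. Protocol: in each round $t=1,\dots,T$ the environment fixes vectors $\theta_{t,1},\dots,\theta_{t,K}\in\mathbb R^d$ with $\|\theta_{t,k}\|_2\le1$ (not depending on the learner's actions), a context $X_t\sim\mathcal D$ is drawn independently of the past, the learner observes $X_t$, plays $A_t\in\mathcal A$, suffers $\sum_k\ell_t(X_t,k)(A_t)_k$ and observes $\ell_t(X_t,k)$ for every $k$ with $(A_t)_k=1$; all losses satisfy $\ell_t(x,k)\in[-1,1]$. Let $\mathcal F_t=\sigma(X_1,A_1,\dots,X_t,A_t)$ and $H(a)=-\sum_{k=1}^K a_k\ln a_k$ (with $0\ln 0=0$) for $a\in\mathrm{conv}(\mathcal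 A)$. Parameters: $c_1=\sqrt{(d+\ln T/\lambda_{\min}(\Sigma))K\ln T/(m\ln(K/m))}$, assumed $\ge1$; $c_2=8K/\lambda_{\min}(\Sigma)$; $\beta'_1=c_1$ and $\beta'_{t+1}=\beta'_t+c_1\big(1+(m\ln(K/m))^{-1}\sum_{s=1}^tH(\bar A_s(X_s))\big)^{-1/2}$; $\beta_t=\max\{2,c_2\ln T,\beta'_t\}$; $\eta_t=1/\beta_t$; $\alpha_t=4K\ln(t)/\lambda_{\min}(\Sigma)$; $\gamma_t=\alpha_t\eta_t$; $M_t=\lceil 4K\ln(t)/(\gamma_t\lambda_{\min}(\Sigma))\rceil=\lceil 1/\eta_t\rceil$ (the latter expression also used at $t=1$); $E=\{e_1,\dots,e_K\}\subseteq\mathcal A$ the standard basis vectors. Algorithm 1: set $\tilde\theta_{0,k}=0$. In round $t$: for a context $x$ let $\bar A_t(x)\in\arg\min_{a\in\mathrm{conv}(\mathcal A)}\{\sum_{s=1}^{t-1}\sum_{k}\langle x,\tilde\theta_{s,k}\rangle a_k-H(a)/\eta_t\}$; let $p_t(\cdot|x)$ be any distribution on $\mathcal A$ with $\sum_a p_t(a|x)\,a=\bar A_t(x)$; let $\pi_t(a|x)=(1-\gamma_t)p_t(a|x)+\gamma_t\mathbf 1[a\in E]/K$; sample $A_t\sim\pi_t(\cdot|X_t)$. Then draw $M_t$ fresh independent pairs $X(n)\sim\mathcal D$, $A(n)\sim\pi_t(\cdot|X(n))$, set $C_{n,k}=\prod_{j=1}^n\big(I-(A(j))_kX(j)X(j)^\top/2\big)$,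 $\widehat\Sigma^+_{t,k}=\big(I+\sum_{n=1}^{M_t}C_{n,k}\big)/2$, and $\tilde\theta_{t,k}=\widehat\Sigma^+_{t,k}X_t\,\ell_t(X_t,k)(A_t)_k$ for all $k\in[K]$. *)

theory Defs
  imports "HOL-Probability.Probability"
begin

text \<open>Explicit carriers: a context in R^d is a function nat => real of which only the
coordinates i < d matter (the context distribution lives on the finite product space
PiM {..<d}); matrices are nat => nat => real indexed by i,j < d; arms are 0..K-1; an
action is a subset S of {..<K} with card S <= m (its 0/1 vector is avec S).\<close>

type_synonym ctx = "nat \<Rightarrow> real"
type_synonym rmat = "nat \<Rightarrow> nat \<Rightarrow> real"
type_synonym sample = "ctx \<times> nat set"
type_synonym hist = "(ctx \<times> (nat \<Rightarrow> ctx)) list"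
  \<comment> \<open>entry s-1 of a history is the pair (X_s, k \<mapsto> tilde theta_{s,k})\<close>

definition ip :: "nat \<Rightarrow> ctx \<Rightarrow> ctx \<Rightarrow> real" where
  "ip d x y = (\<Sum>i<d. x i * y i)"

definition idm :: rmat where
  "idm = (\<lambda>i j. if i = j then 1 else 0)"

definition mmul :: "nat \<Rightarrow> rmat \<Rightarrow> rmat \<Rightarrow> rmat" where
  "mmul d A B = (\<lambda>i j. \<Sum>l<d. A i l * B l j)"

definition mvec :: "nat \<Rightarrow> rmat \<Rightarrow> ctx \<Rightarrow> ctx" where
  "mvec d A v = (\<lambda>i. \<Sum>j<d. A i j * v j)"

definition second_moment :: "ctx measure \<Rightarrow> rmat" where
  "second_moment D = (\<lambda>i j. \<integral>x. x i * x j \<partial>D)"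

definition posdef :: "nat \<Rightarrow> rmat \<Rightarrow> bool" where
  "posdef d S \<longleftrightarrow> (\<forall>v. (\<exists>i<d. v i \<noteq> 0) \<longrightarrow> (\<Sum>i<d. \<Sum>j<d. v i * S i j * v j) > 0)"

definition lambda_min :: "nat \<Rightarrow> rmat \<Rightarrow> real" where
  "lambda_min d S = Min {l. \<exists>v. (\<exists>i<d. v i \<noteq> 0) \<and> (\<forall>i<d. (\<Sum>j<d. S i j * v j) = l * v i)}"

definition acts :: "nat \<Rightarrow> nat \<Rightarrow> nat set set" where
  "acts K m = {S. S \<subseteq> {..<K} \<and> card S \<le> m}"

definition avec :: "nat set \<Rightarrow> nat \<Rightarrow> real" where
  "avec S = (\<lambda>k. if k \<in> S then 1 else 0)"

definition convA :: "nat \<Rightarrow> nat \<Rightarrow> (nat \<Rightarrow> real) set" where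
  "convA K m = {a. \<exists>w. (\<forall>S\<in>acts K m. 0 \<le> w S) \<and> (\<Sum>S\<in>acts K m. w S) = 1 \<and>
                     a = (\<lambda>k. \<Sum>S\<in>acts K m. w S * avec S k)}"

definition basisE :: "nat \<Rightarrow> nat set set" where
  "basisE K = (\<lambda>k. {k}) ` {..<K}"

definition ent :: "nat \<Rightarrow> (nat \<Rightarrow> real) \<Rightarrow> real" where
  "ent K a = - (\<Sum>k<K. if a k = 0 then 0 else a k * ln (a k))"

text \<open>FTRL objective; th is the list tilde theta_1, ..., tilde theta_{t-1}\<close>
definition objf :: "nat \<Rightarrow> nat \<Rightarrow> real \<Rightarrow> (nat \<Rightarrow> ctx) list \<Rightarrow> ctx \<Rightarrow> (nat \<Rightarrow> real) \<Rightarrow> real" where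
  "objf K d \<eta> th x a = (\<Sum>s<length th. \<Sum>k<K. ip d x ((th ! s) k) * a k) - ent K a / \<eta>"

definition Abar :: "nat \<Rightarrow> nat \<Rightarrow> nat \<Rightarrow> real \<Rightarrow> (nat \<Rightarrow> ctx) list \<Rightarrow> ctx \<Rightarrow> (nat \<Rightarrow> real)" where
  "Abar K m d \<eta> th x = (SOME a. a \<in> convA K m \<and> (\<forall>b\<in>convA K m. objf K d \<eta> th x a \<le> objf K d \<eta> th x b))"

definition lmin :: "ctx measure \<Rightarrow> nat \<Rightarrow> real" where
  "lmin D d = lambda_min d (second_moment D)"

definition cc1 :: "ctx measure \<Rightarrow> nat \<Rightarrow> nat \<Rightarrow> nat \<Rightarrow> nat \<Rightarrow> real" where
  "cc1 D d K m T = sqrt ((real d + ln (real T) / lmin D d) * real K * ln (real T)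
                        / (real m * ln (real K / real m)))"

definition cc2 :: "ctx measure \<Rightarrow> nat \<Rightarrow> nat \<Rightarrow> real" where
  "cc2 D d K = 8 * real K / lmin D d"

text \<open>bp t = (beta'_{t+1}, S_t) with S_t = sum_{s=1}^t H(Abar_s(X_s))\<close>
primrec bp :: "ctx measure \<Rightarrow> nat \<Rightarrow> nat \<Rightarrow> nat \<Rightarrow> nat \<Rightarrow> hist \<Rightarrow> nat \<Rightarrow> real \<times> real" where
  "bp D d K m T h 0 = (cc1 D d K m T, 0)"
| "bp D d K m T h (Suc t) =
    (let b = fst (bp D d K m T h t);
         S = snd (bp D d K m T h t);
         \<eta> = 1 / max (max 2 (cc2 D d K * ln (real T))) b;
         a = Abar K m d \<eta> (map snd (take t h)) (fst (h ! t));
         S' = S + ent K a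
     in (b + cc1 D d K m T / sqrt (1 + S' / (real m * ln (real K / real m))), S'))"

definition betap :: "ctx measure \<Rightarrow> nat \<Rightarrow> nat \<Rightarrow> nat \<Rightarrow> nat \<Rightarrow> hist \<Rightarrow> nat \<Rightarrow> real" where
  "betap D d K m T h t = fst (bp D d K m T h (t - 1))"

definition beta :: "ctx measure \<Rightarrow> nat \<Rightarrow> nat \<Rightarrow> nat \<Rightarrow> nat \<Rightarrow> hist \<Rightarrow> nat \<Rightarrow> real" where
  "beta D d K m T h t = max (max 2 (cc2 D d K * ln (real T))) (betap D d K m T h t)"

definition eta :: "ctx measure \<Rightarrow> nat \<Rightarrow> nat \<Rightarrow> nat \<Rightarrow> nat \<Rightarrow> hist \<Rightarrow> nat \<Rightarrow> real" where
  "eta D d K m T h t = 1 / beta D d K m T h t"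

definition Abar_t :: "ctx measure \<Rightarrow> nat \<Rightarrow> nat \<Rightarrow> nat \<Rightarrow> nat \<Rightarrow> hist \<Rightarrow> nat \<Rightarrow> ctx \<Rightarrow> (nat \<Rightarrow> real)" where
  "Abar_t D d K m T h t x = Abar K m d (eta D d K m T h t) (map snd (take (t - 1) h)) x"

definition gam :: "ctx measure \<Rightarrow> nat \<Rightarrow> nat \<Rightarrow> nat \<Rightarrow> nat \<Rightarrow> hist \<Rightarrow> nat \<Rightarrow> real" where
  "gam D d K m T h t = (4 * real K * ln (real t) / lmin D d) * eta D d K m T h t"

definition Mt :: "ctx measure \<Rightarrow> nat \<Rightarrow> nat \<Rightarrow> nat \<Rightarrow> nat \<Rightarrow> hist \<Rightarrow> nat \<Rightarrow> nat" where
  "Mt D d K m T h t = nat \<lceil>1 / eta D d K m T h t\<rceil>"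

text \<open>pi_t(.|x) = (1-gamma_t) p_t(.|x) + gamma_t Unif(E); p t a is the chosen distribution
  on actions with mean a (here a = Abar_t(x))\<close>
definition pol :: "ctx measure \<Rightarrow> nat \<Rightarrow> nat \<Rightarrow> nat \<Rightarrow> nat \<Rightarrow> (nat \<Rightarrow> (nat \<Rightarrow> real) \<Rightarrow> nat set pmf)
                   \<Rightarrow> hist \<Rightarrow> nat \<Rightarrow> ctx \<Rightarrow> nat set pmf" where
  "pol D d K m T p h t x = bind_pmf (bernoulli_pmf (gam D d K m T h t))
      (\<lambda>b. if b then pmf_of_set (basisE K) else p t (Abar_t D d K m T h t x))"

text \<open>C_{n,k} for the first n samples (product taken in the order j = 1..n)\<close>
definition Cmat :: "nat \<Rightarrow> nat \<Rightarrow> sample list \<Rightarrow> rmat" where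
  "Cmat d k ys = foldl (\<lambda>C (x, S). mmul d C (\<lambda>i j. idm i j - avec S k * x i * x j / 2)) idm ys"

definition Sigplus :: "nat \<Rightarrow> nat \<Rightarrow> sample list \<Rightarrow> rmat" where
  "Sigplus d k ys = (\<lambda>i j. (idm i j + (\<Sum>n\<in>{1..length ys}. Cmat d k (take n ys) i j)) / 2)"

definition theta_est :: "nat \<Rightarrow> (nat \<Rightarrow> ctx \<Rightarrow> nat \<Rightarrow> real) \<Rightarrow> nat \<Rightarrow> ctx \<Rightarrow> nat set
                          \<Rightarrow> sample list \<Rightarrow> (nat \<Rightarrow> ctx)" where
  "theta_est d loss t x A ys = (\<lambda>k. mvec d (Sigplus d k ys) (\<lambda>i. loss t x k * avec A k * x i))"

text \<open>Expectation of G over n i.i.d. pairs (X(j), A(j)), X(j) ~ D, A(j) ~ Q(X(j)), listed as j = 1..n\<close>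
primrec samp :: "ctx measure \<Rightarrow> (ctx \<Rightarrow> nat set pmf) \<Rightarrow> nat \<Rightarrow> (sample list \<Rightarrow> ennreal) \<Rightarrow> ennreal" where
  "samp D Q 0 G = G []"
| "samp D Q (Suc n) G =
     (\<integral>\<^sup>+ x. (\<integral>\<^sup>+ A. samp D Q n (\<lambda>ys. G ((x, A) # ys)) \<partial>measure_pmf (Q x)) \<partial>D)"

text \<open>Expectation of a functional F of the history after n further rounds of Algorithm 1,
  starting from history h (round t = length h + 1 is played next)\<close>
primrec run :: "ctx measure \<Rightarrow> nat \<Rightarrow> nat \<Rightarrow> nat \<Rightarrow> nat \<Rightarrow> (nat \<Rightarrow> ctx \<Rightarrow> nat \<Rightarrow> real)
                 \<Rightarrow> (nat \<Rightarrow> (nat \<Rightarrow> real) \<Rightarrow> nat set pmf) \<Rightarrow> nat \<Rightarrow> hist \<Rightarrow> (hist \<Rightarrow> ennreal) \<Rightarrow> ennreal" where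
  "run D d K m T loss p 0 h F = F h"
| "run D d K m T loss p (Suc n) h F =
     (let t = Suc (length h) in
      \<integral>\<^sup>+ x. (\<integral>\<^sup>+ A. samp D (pol D d K m T p h t) (Mt D d K m T h t)
                (\<lambda>ys. run D d K m T loss p n (h @ [(x, theta_est d loss t x A ys)]) F)
             \<partial>measure_pmf (pol D d K m T p h t x)) \<partial>D)"

definition context_dist :: "nat \<Rightarrow> ctx measure \<Rightarrow> bool" where
  "context_dist d D \<longleftrightarrow> prob_space D \<and> sets D = sets (\<Pi>\<^sub>M i\<in>{..<d}. lborel)
     \<and> (AE x in D. ip d x x \<le> 1) \<and> posdef d (second_moment D)"

definition losses_ok :: "nat \<Rightarrow> nat \<Rightarrow> (nat \<Rightarrow> ctx \<Rightarrow> nat \<Rightarrow> real) \<Rightarrow> bool" where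
  "losses_ok d K loss \<longleftrightarrow> (\<forall>t x k. \<bar>loss t x k\<bar> \<le> 1)
     \<and> (\<forall>t k. (\<lambda>x. loss t x k) \<in> borel_measurable (\<Pi>\<^sub>M i\<in>{..<d}. lborel))"

definition decomp_ok :: "nat \<Rightarrow> nat \<Rightarrow> (nat \<Rightarrow> (nat \<Rightarrow> real) \<Rightarrow> nat set pmf) \<Rightarrow> bool" where
  "decomp_ok K m p \<longleftrightarrow>
     (\<forall>t a. a \<in> convA K m \<longrightarrow> set_pmf (p t a) \<subseteq> acts K m \<and>
                (\<forall>k<K. (\<Sum>S\<in>acts K m. pmf (p t a) S * avec S k) = a k))
   \<and> (\<forall>t S. (\<lambda>a. pmf (p t a) S) \<in> borel_measurable (\<Pi>\<^sub>M i\<in>(UNIV::nat set). lborel))"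

end

theory Submission
  imports Defs "HOL-Real_Asymp.Real_Asymp"
begin

text \<open>
  The weight \<open>\<beta>'(t+1) - \<beta>'(t) = c\<^sub>1 / sqrt (1 + S(t) / (m ln (K/m)))\<close>, where
  \<open>S(t) = H(Abar 1 (X 1)) + \<dots> + H(Abar t (X t))\<close>, is determined by the first \<open>t\<close> rounds,
  which never see \<open>X (t+1)\<close>. Hence in expectation the ghost context may be replaced by
  \<open>X (t+1)\<close> in every term but the last, where the entropy is bounded by its maximum
  \<open>H(Abar 1)\<close>. Along every history the resulting sum then telescopes: since no entropy exceeds
  the first one, \<open>x / sqrt (1 + S/c) \<le> 3 sqrt c (sqrt (S + x) - sqrt S)\<close> for \<open>0 \<le> x \<le> S\<close>,
  so the sum is at most \<open>6 c\<^sub>1 sqrt c sqrt (S T)\<close>. Jensen's inequality for the square root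
  gives the claim with \<open>L' = 6\<close>. The expectation over a run is an iterated integral of
  nonnegative functions, so its linearity needs every quantity computed by the algorithm to be
  measurable; this accounts for most of the work.
\<close>

definition xlnx :: "real \<Rightarrow> real" where "xlnx x = (if x = 0 then 0 else x * ln x)"

lemma ent_eq_xlnx: "ent K a = - (\<Sum>k<K. xlnx (a k))"
  unfolding ent_def xlnx_def by simp

lemma ln_less_minus_one: fixes t::real assumes "0 < t" "t \<noteq> 1" shows "ln t < t - 1"
proof -
  have s: "0 < sqrt t" using assms by simp
  have "ln t = 2 * ln (sqrt t)" using assms by (simp add: ln_sqrt)
  also have "\<dots> \<le> 2 * (sqrt t - 1)" using ln_le_minus_one[OF s] by simp
  also have "\<dots> < t - 1"
  proof -
    have "sqrt t \<noteq> 1" using assms by auto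
    then have "0 < (sqrt t - 1)^2" by simp
    moreover have "(sqrt t - 1)^2 = t - 1 - 2 * (sqrt t - 1)" using assms
      by (simp add: power2_eq_square algebra_simps)
    ultimately show ?thesis by simp
  qed
  finally show ?thesis .
qed

lemma xlnx_ge_tangent: assumes "0 \<le> x" "0 < z"
  shows "xlnx x \<ge> xlnx z + (1 + ln z) * (x - z)" and "x \<noteq> z \<Longrightarrow> xlnx x > xlnx z + (1 + ln z) * (x - z)"
proof -
  have key: "xlnx x - xlnx z - (1 + ln z) * (x - z) \<ge> 0 \<and> (x \<noteq> z \<longrightarrow> xlnx x - xlnx z - (1 + ln z) * (x - z) > 0)"
  proof (cases "x = 0")
    case True
    then show ?thesis using assms by (simp add: xlnx_def algebra_simps)
  next
    case False
    then have xp: "x > 0" using assms by simp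
    have eq: "xlnx x - xlnx z - (1 + ln z) * (x - z) = x * ( - ln (z / x)) - x + z"
      using xp assms by (simp add: xlnx_def ln_div algebra_simps)
    have "ln (z/x) \<le> z/x - 1" using ln_le_minus_one xp assms by simp
    then have "x * (- ln (z/x)) \<ge> x * (1 - z/x)" using xp by (intro mult_left_mono) auto
    then have ge: "x * (- ln (z/x)) - x + z \<ge> 0" using xp by (simp add: algebra_simps)
    have gt: "x \<noteq> z \<longrightarrow> x * (- ln (z/x)) - x + z > 0"
    proof
      assume "x \<noteq> z"
      then have "z/x \<noteq> 1" using xp by auto
      then have "ln (z/x) < z/x - 1" by (rule ln_less_minus_one[rotated]) (use xp assms in simp)
      then have "x * (- ln (z/x)) > x * (1 - z/x)" using xp by (intro mult_strict_left_mono) auto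
      then show "x * (- ln (z/x)) - x + z > 0" using xp by (simp add: algebra_simps)
    qed
    show ?thesis using eq ge gt by simp
  qed
  then show "xlnx x \<ge> xlnx z + (1 + ln z) * (x - z)" by simp
  show "x \<noteq> z \<Longrightarrow> xlnx x > xlnx z + (1 + ln z) * (x - z)" using key by simp
qed

lemma xlnx_midpoint: assumes "0 \<le> x" "0 \<le> y"
  shows "xlnx ((x+y)/2) \<le> (xlnx x + xlnx y)/2" and "x \<noteq> y \<Longrightarrow> xlnx ((x+y)/2) < (xlnx x + xlnx y)/2"
proof -
  have r: "xlnx ((x+y)/2) \<le> (xlnx x + xlnx y)/2 \<and> (x \<noteq> y \<longrightarrow> xlnx ((x+y)/2) < (xlnx x + xlnx y)/2)"
  proof (cases "x + y = 0")
    case True then show ?thesis using assms by (simp add: xlnx_def)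
  next
    case False
    define z where "z = (x+y)/2"
    have zp: "z > 0" using False assms z_def by simp
    note t1 = xlnx_ge_tangent[OF assms(1) zp] and t2 = xlnx_ge_tangent[OF assms(2) zp]
    have s: "(1 + ln z) * (x - z) + (1 + ln z) * (y - z) = 0" unfolding z_def by (simp add: algebra_simps)
    have "xlnx z \<le> (xlnx x + xlnx y)/2" using t1(1) t2(1) s by simp
    moreover have "x \<noteq> y \<longrightarrow> xlnx z < (xlnx x + xlnx y)/2"
    proof
      assume "x \<noteq> y" then have "x \<noteq> z" unfolding z_def by simp
      then show "xlnx z < (xlnx x + xlnx y)/2" using t1(2) t2(1) s by simp
    qed
    ultimately show ?thesis unfolding z_def by simp
  qed
  then show "xlnx ((x+y)/2) \<le> (xlnx x + xlnx y)/2" "x \<noteq> y \<Longrightarrow> xlnx ((x+y)/2) < (xlnx x + xlnx y)/2" by auto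
qed

lemma continuous_on_xlnx: "continuous_on {0..} xlnx"
  unfolding continuous_on_def
proof (intro ballI)
  fix x :: real assume x: "x \<in> {0..}"
  show "(xlnx \<longlongrightarrow> xlnx x) (at x within {0..})"
  proof (cases "x = 0")
    case True
    have "at (0::real) within {0..} = at_right 0" by (simp add: at_within_Ici_at_right)
    moreover have "((\<lambda>y::real. y * ln y) \<longlongrightarrow> 0) (at_right 0)" by real_asymp
    then have "(xlnx \<longlongrightarrow> 0) (at_right 0)"
      by (rule tendsto_cong[THEN iffD1, rotated]) (auto simp: xlnx_def eventually_at_right_less)
    ultimately show ?thesis using True by (simp add: xlnx_def)
  next
    case False
    then have xp: "x > 0" using x by simp
    have "isCont (\<lambda>y. y * ln y) x" using xp by (intro continuous_intros) auto
    then have "((\<lambda>y. y * ln y) \<longlongrightarrow> x * ln x) (at x)" by (simp add: isCont_def)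
    moreover have ev: "\<forall>\<^sub>F y in at x. y * ln y = xlnx y"
      unfolding eventually_at using xp by (auto simp: xlnx_def dist_real_def intro!: exI[of _ x])
    ultimately have "(xlnx \<longlongrightarrow> xlnx x) (at x)" using tendsto_cong[OF ev] xp by (simp add: xlnx_def[abs_def])
    then show ?thesis by (rule tendsto_within_subset) simp
  qed
qed

lemma borel_measurable_xlnx[measurable]: "xlnx \<in> borel_measurable borel"
  unfolding xlnx_def[abs_def] by measurable

lemma xlnx_nonpos: "0 \<le> y \<Longrightarrow> y \<le> 1 \<Longrightarrow> xlnx y \<le> 0"
  unfolding xlnx_def by (auto intro!: mult_nonneg_nonpos simp: ln_le_zero_iff)

lemma finite_acts: "finite (acts K m)"
  by (rule finite_subset[of _ "Pow {..<K}"]) (auto simp: acts_def)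

lemma empty_acts: "{} \<in> acts K m" by (simp add: acts_def)

lemma convA_bounds: assumes "a \<in> convA K m"
  shows "0 \<le> a k" "a k \<le> 1" "K \<le> k \<Longrightarrow> a k = 0"
proof -
  obtain w where w: "\<forall>S\<in>acts K m. 0 \<le> w S" "(\<Sum>S\<in>acts K m. w S) = 1"
    "a = (\<lambda>k. \<Sum>S\<in>acts K m. w S * avec S k)" using assms unfolding convA_def by blast
  show "0 \<le> a k" unfolding w(3) using w(1) by (auto intro!: sum_nonneg simp: avec_def)
  have "(\<Sum>S\<in>acts K m. w S * avec S k) \<le> (\<Sum>S\<in>acts K m. w S)"
    using w(1) by (intro sum_mono) (auto simp: avec_def)
  then show "a k \<le> 1" using w by simp
  assume "K \<le> k"
  then have "\<forall>S\<in>acts K m. avec S k = 0" by (auto simp: acts_def avec_def)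
  then show "a k = 0" unfolding w(3) by simp
qed

lemma convA_convex_comb: assumes "a \<in> convA K m" "b \<in> convA K m" "0 \<le> s" "s \<le> 1"
  shows "(\<lambda>k. (1 - s) * a k + s * b k) \<in> convA K m"
proof -
  obtain w where w: "\<forall>S\<in>acts K m. 0 \<le> w S" "(\<Sum>S\<in>acts K m. w S) = 1"
    "a = (\<lambda>k. \<Sum>S\<in>acts K m. w S * avec S k)" using assms unfolding convA_def by blast
  obtain v where v: "\<forall>S\<in>acts K m. 0 \<le> v S" "(\<Sum>S\<in>acts K m. v S) = 1"
    "b = (\<lambda>k. \<Sum>S\<in>acts K m. v S * avec S k)" using assms unfolding convA_def by blast
  show ?thesis unfolding convA_def
  proof (rule CollectI, rule exI[of _ "\<lambda>S. (1 - s) * w S + s * v S"], intro conjI ballI)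
    fix S assume "S \<in> acts K m" then show "0 \<le> (1 - s) * w S + s * v S"
      using w v assms(3,4) by (intro add_nonneg_nonneg mult_nonneg_nonneg) auto
  next
    show "(\<Sum>S\<in>acts K m. (1 - s) * w S + s * v S) = 1"
      using w v by (simp add: sum.distrib sum_distrib_left[symmetric])
  next
    show "(\<lambda>k. (1 - s) * a k + s * b k) = (\<lambda>k. \<Sum>S\<in>acts K m. ((1 - s) * w S + s * v S) * avec S k)"
      unfolding w(3) v(3) by (simp add: sum.distrib sum_distrib_left distrib_right mult.assoc)
  qed
qed

lemma convA_avec: "S \<in> acts K m \<Longrightarrow> avec S \<in> convA K m"
  unfolding convA_def
  by (rule CollectI, rule exI[of _ "\<lambda>T. if T = S then 1 else 0"])
     (auto simp: finite_acts if_distrib[of "\<lambda>x. x * _"] cong: if_cong)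

lemma convA_nonempty: "convA K m \<noteq> {}" using convA_avec[OF empty_acts] by blast

lemma compact_convA: "compact (convA K m)"
proof -
  define A where "A = acts K m"
  define W where "W = (Pi\<^sub>E UNIV (\<lambda>S. if S \<in> A then {0..1::real} else {0})) \<inter> {w. sum w A = 1}"
  define L where "L = (\<lambda>w::nat set \<Rightarrow> real. (\<lambda>k. \<Sum>S\<in>A. w S * avec S k))"
  have c1: "compact (Pi\<^sub>E UNIV (\<lambda>S. if S \<in> A then {0..1::real} else {0}))"
  proof -
    have "compactin (product_topology (\<lambda>_. euclidean) UNIV) (Pi\<^sub>E UNIV (\<lambda>S. if S \<in> A then {0..1::real} else {0}))"
      by (subst compactin_PiE) (auto simp: compactin_euclidean_iff)
    then show ?thesis by (simp add: euclidean_product_topology compactin_euclidean_iff)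
  qed
  have c2: "closed {w::nat set \<Rightarrow> real. sum w A = 1}"
    by (rule closed_Collect_eq) (auto intro!: continuous_intros continuous_on_product_coordinates)
  have cW: "compact W" unfolding W_def using c1 c2 by (rule compact_Int_closed)
  have cL: "continuous_on UNIV L" unfolding L_def
    by (intro continuous_on_coordinatewise_then_product continuous_intros continuous_on_product_coordinates)
  have "convA K m = L ` W"
  proof
    show "L ` W \<subseteq> convA K m" unfolding W_def L_def convA_def A_def by (auto simp: PiE_def Pi_def)
    show "convA K m \<subseteq> L ` W"
    proof
      fix a assume "a \<in> convA K m"
      then obtain w where w: "\<forall>S\<in>A. 0 \<le> w S" "(\<Sum>S\<in>A. w S) = 1"
        "a = (\<lambda>k. \<Sum>S\<in>A. w S * avec S k)" unfolding convA_def A_def by blast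
      define w' where "w' = (\<lambda>S. if S \<in> A then w S else 0)"
      have le1: "w S \<le> 1" if "S \<in> A" for S
      proof -
        have "w S \<le> (\<Sum>S\<in>A. w S)" using w(1) that finite_acts[of K m] unfolding A_def
          by (intro member_le_sum) auto
        then show ?thesis using w(2) by simp
      qed
      have "w' \<in> W" unfolding W_def w'_def using w le1 by (auto simp: PiE_def Pi_def)
      moreover have "L w' = a" unfolding L_def w'_def w(3) by simp
      ultimately show "a \<in> L ` W" by blast
    qed
  qed
  then show ?thesis using compact_continuous_image[OF continuous_on_subset[OF cL] cW] by simp
qed

lemma ent_nonneg: "a \<in> convA K m \<Longrightarrow> 0 \<le> ent K a"
  unfolding ent_eq_xlnx using xlnx_nonpos convA_bounds by (simp add: sum_nonpos)

lemma ent_midpoint: assumes "a \<in> convA K m" "b \<in> convA K m"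
  shows "ent K (\<lambda>k. (1 - 1/2) * a k + 1/2 * b k) \<ge> (ent K a + ent K b)/2"
    and "a \<noteq> b \<Longrightarrow> ent K (\<lambda>k. (1 - 1/2) * a k + 1/2 * b k) > (ent K a + ent K b)/2"
proof -
  have mid: "(1 - 1/2) * x + 1/2 * y = (x + y)/2" for x y :: real by simp
  have pt: "xlnx ((a k + b k)/2) \<le> (xlnx (a k) + xlnx (b k))/2" for k
    using xlnx_midpoint(1) convA_bounds(1)[OF assms(1)] convA_bounds(1)[OF assms(2)] by blast
  have eq: "(ent K a + ent K b)/2 = - (\<Sum>k<K. (xlnx (a k) + xlnx (b k))/2)"
    unfolding ent_eq_xlnx by (simp add: sum.distrib sum_divide_distrib[symmetric]) (simp add: field_simps)
  show "ent K (\<lambda>k. (1 - 1/2) * a k + 1/2 * b k) \<ge> (ent K a + ent K b)/2"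
    unfolding eq unfolding ent_eq_xlnx mid using pt by (simp add: sum_mono)
  assume "a \<noteq> b"
  then obtain j where j: "a j \<noteq> b j" by auto
  have jK: "j < K" using j convA_bounds(3)[OF assms(1)] convA_bounds(3)[OF assms(2)] by (metis not_le)
  have ptj: "xlnx ((a j + b j)/2) < (xlnx (a j) + xlnx (b j))/2"
    using xlnx_midpoint(2) convA_bounds(1)[OF assms(1)] convA_bounds(1)[OF assms(2)] j by blast
  have "(\<Sum>k<K. xlnx ((a k + b k)/2)) < (\<Sum>k<K. (xlnx (a k) + xlnx (b k))/2)"
    by (rule sum_strict_mono_ex1) (use pt ptj jK in auto)
  then show "ent K (\<lambda>k. (1 - 1/2) * a k + 1/2 * b k) > (ent K a + ent K b)/2"
    unfolding eq unfolding ent_eq_xlnx mid by simp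
qed

section \<open>Entropy-regularised linear minimisation over the polytope\<close>

definition reg_obj :: "nat \<Rightarrow> real \<Rightarrow> (nat \<Rightarrow> real) \<Rightarrow> (nat \<Rightarrow> real) \<Rightarrow> real" where
  "reg_obj K B c a = (\<Sum>k<K. c k * a k) - B * ent K a"

definition reg_min :: "nat \<Rightarrow> nat \<Rightarrow> real \<Rightarrow> (nat \<Rightarrow> real) \<Rightarrow> (nat \<Rightarrow> real)" where
  "reg_min K m B c = (SOME a. a \<in> convA K m \<and> (\<forall>b\<in>convA K m. reg_obj K B c a \<le> reg_obj K B c b))"

lemma continuous_on_xlnx_coord: "continuous_on (convA K m) (\<lambda>a. xlnx (a k))"
proof (rule continuous_on_compose2[OF continuous_on_xlnx])
  show "continuous_on (convA K m) (\<lambda>a. a k)"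
    by (rule continuous_on_subset[OF continuous_on_product_coordinates]) simp
  show "(\<lambda>a. a k) ` convA K m \<subseteq> {0..}" using convA_bounds by auto
qed

lemma continuous_on_reg_obj: "continuous_on (convA K m) (reg_obj K B c)"
  unfolding reg_obj_def[abs_def] ent_eq_xlnx
  by (intro continuous_intros continuous_on_xlnx_coord continuous_on_subset[OF continuous_on_product_coordinates]) auto

lemma reg_min_is_min: "reg_min K m B c \<in> convA K m \<and> (\<forall>b\<in>convA K m. reg_obj K B c (reg_min K m B c) \<le> reg_obj K B c b)"
proof -
  have "\<exists>a\<in>convA K m. \<forall>b\<in>convA K m. reg_obj K B c a \<le> reg_obj K B c b"
    by (rule continuous_attains_inf[OF compact_convA convA_nonempty continuous_on_reg_obj])
  then show ?thesis unfolding reg_min_def by (rule someI_ex[where P="\<lambda>a. a \<in> convA K m \<and> (\<forall>b\<in>convA K m. reg_obj K B c a \<le> reg_obj K B c b)", OF bexE]) auto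
qed

lemma reg_obj_min_unique: assumes "0 < B" "a \<in> convA K m" "a' \<in> convA K m"
  "\<forall>b\<in>convA K m. reg_obj K B c a \<le> reg_obj K B c b" "\<forall>b\<in>convA K m. reg_obj K B c a' \<le> reg_obj K B c b"
  shows "a = a'"
proof (rule ccontr)
  assume ne: "a \<noteq> a'"
  define z where "z = (\<lambda>k. (1 - 1/2) * a k + 1/2 * a' k)"
  have z: "z \<in> convA K m" unfolding z_def by (rule convA_convex_comb) (use assms in auto)
  have eqF: "reg_obj K B c a = reg_obj K B c a'" using assms(2-5) by (meson antisym)
  have lin: "(\<Sum>k<K. c k * z k) = ((\<Sum>k<K. c k * a k) + (\<Sum>k<K. c k * a' k))/2"
    unfolding z_def by (simp add: sum.distrib sum_divide_distrib[symmetric] algebra_simps)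
  have "ent K z > (ent K a + ent K a')/2" unfolding z_def by (rule ent_midpoint(2)[OF assms(2,3) ne])
  then have "B * ent K z > B * ((ent K a + ent K a')/2)" using assms(1) by simp
  then have "reg_obj K B c z < (reg_obj K B c a + reg_obj K B c a')/2" unfolding reg_obj_def lin by (simp add: field_simps)
  then have "reg_obj K B c z < reg_obj K B c a" using eqF by simp
  then show False using assms(4) z by force
qed

lemma reg_min_unique: assumes "0 < B" "a \<in> convA K m" "\<forall>b\<in>convA K m. reg_obj K B c a \<le> reg_obj K B c b"
  shows "reg_min K m B c = a"
  using reg_obj_min_unique[OF assms(1) _ assms(2) _ assms(3)] reg_min_is_min by blast

lemma tendsto_fun_coord: "((f :: nat \<Rightarrow> (nat \<Rightarrow> real)) \<longlongrightarrow> l) F \<Longrightarrow> ((\<lambda>n. f n k) \<longlongrightarrow> l k) F"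
  by (rule continuous_on_tendsto_compose[OF continuous_on_product_coordinates]) auto

lemma tendsto_reg_obj:
  assumes "(Bs \<longlongrightarrow> B) F" "\<forall>k<K. ((\<lambda>n. cs n k) \<longlongrightarrow> c k) F"
    "\<forall>k<K. ((\<lambda>n. as n k) \<longlongrightarrow> a k) F" "\<forall>n. as n \<in> convA K m" "a \<in> convA K m"
  shows "((\<lambda>n. reg_obj K (Bs n) (cs n) (as n)) \<longlongrightarrow> reg_obj K B c a) F"
proof -
  have ph: "((\<lambda>n. xlnx (as n k)) \<longlongrightarrow> xlnx (a k)) F" if "k < K" for k
  proof (rule continuous_on_tendsto_compose[OF continuous_on_xlnx])
    show "((\<lambda>n. as n k) \<longlongrightarrow> a k) F" using assms(3) that by blast
    show "a k \<in> {0..}" using convA_bounds(1)[OF assms(5)] by simp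
    have "\<forall>n. as n k \<in> {0..}" using convA_bounds(1) assms(4) by (simp add: atLeast_iff) blast
    then show "\<forall>\<^sub>F n in F. as n k \<in> {0..}" by (simp add: always_eventually)
  qed
  show ?thesis unfolding reg_obj_def ent_eq_xlnx
    by (intro tendsto_intros) (use assms ph in auto)
qed

lemma reg_min_limit:
  assumes Bs: "Bs \<longlonglongrightarrow> B" and cs: "\<forall>k<K. (\<lambda>n. cs n k) \<longlonglongrightarrow> c k" and B: "0 < B"
    and lim: "(\<lambda>n. reg_min K m (Bs n) (cs n)) \<longlonglongrightarrow> l"
  shows "l = reg_min K m B c"
proof -
  have inA: "\<forall>n. reg_min K m (Bs n) (cs n) \<in> convA K m" using reg_min_is_min by blast
  have l: "l \<in> convA K m"
    using closed_sequentially[OF compact_imp_closed[OF compact_convA] _ lim] inA by blast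
  have "reg_obj K B c l \<le> reg_obj K B c b" if b: "b \<in> convA K m" for b
  proof (rule tendsto_le[OF _ tendsto_reg_obj[OF Bs cs _ _ b] tendsto_reg_obj[OF Bs cs _ inA l]])
    show "\<forall>\<^sub>F n in sequentially. reg_obj K (Bs n) (cs n) (reg_min K m (Bs n) (cs n)) \<le> reg_obj K (Bs n) (cs n) b"
      using reg_min_is_min b by (simp add: always_eventually)
    show "\<forall>k<K. (\<lambda>n. reg_min K m (Bs n) (cs n) k) \<longlonglongrightarrow> l k" using tendsto_fun_coord[OF lim] by blast
  qed (use b in auto)
  then show ?thesis using reg_min_unique[OF B l] by simp
qed

lemma tendsto_reg_min:
  assumes Bs: "Bs \<longlonglongrightarrow> B" and cs: "\<forall>k<K. (\<lambda>n. cs n k) \<longlonglongrightarrow> c k" and B: "0 < B"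
  shows "(\<lambda>n. reg_min K m (Bs n) (cs n) j) \<longlonglongrightarrow> reg_min K m B c j"
proof (rule ccontr)
  define a where "a = (\<lambda>n. reg_min K m (Bs n) (cs n))"
  assume "\<not> (\<lambda>n. reg_min K m (Bs n) (cs n) j) \<longlonglongrightarrow> reg_min K m B c j"
  then obtain e where e: "e > 0" "\<not> eventually (\<lambda>n. dist (a n j) (reg_min K m B c j) < e) sequentially"
    unfolding tendsto_iff a_def by blast
  define S where "S = {n. \<not> dist (a n j) (reg_min K m B c j) < e}"
  have "infinite S" using e(2) unfolding S_def eventually_sequentially infinite_nat_iff_unbounded_le
    by (auto simp: not_le)
  then have r1: "strict_mono (enumerate S)" "\<And>n. enumerate S n \<in> S"
    by (auto intro: strict_mono_enumerate enumerate_in_set)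
  have inA: "a n \<in> convA K m" for n unfolding a_def using reg_min_is_min by blast
  obtain l r2 where "strict_mono r2" "((a \<circ> enumerate S) \<circ> r2) \<longlonglongrightarrow> l"
    by (rule seq_compactE[OF compact_imp_seq_compact[OF compact_convA], of "a \<circ> enumerate S"])
       (use inA in auto)
  moreover define r where "r = enumerate S \<circ> r2"
  ultimately have r: "strict_mono r" and lim: "(\<lambda>n. a (r n)) \<longlonglongrightarrow> l"
    using r1 strict_mono_o[OF r1(1)] by (auto simp: r_def o_def)
  have "l = reg_min K m B c"
  proof (rule reg_min_limit[where Bs="Bs \<circ> r" and cs="cs \<circ> r"])
    show "(Bs \<circ> r) \<longlonglongrightarrow> B" by (rule LIMSEQ_subseq_LIMSEQ[OF Bs r])
    show "\<forall>k<K. (\<lambda>n. (cs \<circ> r) n k) \<longlonglongrightarrow> c k"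
      using cs LIMSEQ_subseq_LIMSEQ[OF _ r] by (auto simp: o_def)
  qed (use B lim in \<open>simp_all add: a_def o_def\<close>)
  then have "eventually (\<lambda>n. dist (a (r n) j) (reg_min K m B c j) < e) sequentially"
    using tendsto_fun_coord[OF lim, of j] e(1) unfolding tendsto_iff by blast
  then obtain n where "dist (a (r n) j) (reg_min K m B c j) < e" by (auto simp: eventually_sequentially)
  moreover have "r n \<in> S" unfolding r_def using r1 by simp
  ultimately show False unfolding S_def by simp
qed

definition grid_round :: "nat \<Rightarrow> real \<Rightarrow> real" where "grid_round n x = real_of_int \<lfloor>x * real (Suc n)\<rfloor> / real (Suc n)"

lemma grid_round_tendsto: "(\<lambda>n. grid_round n x) \<longlonglongrightarrow> x"
proof (rule tendsto_sandwich[of "\<lambda>n. x - 1 / real (Suc n)" _ _ "\<lambda>n. x"])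
  show "\<forall>\<^sub>F n in sequentially. x - 1 / real (Suc n) \<le> grid_round n x"
  proof (intro always_eventually allI)
    fix n
    have "x * real (Suc n) - 1 \<le> real_of_int \<lfloor>x * real (Suc n)\<rfloor>" by linarith
    then have "(x * real (Suc n) - 1) / real (Suc n) \<le> grid_round n x" unfolding grid_round_def
      by (rule divide_right_mono) simp
    moreover have "(x * real (Suc n) - 1) / real (Suc n) = x - 1 / real (Suc n)"
      by (simp add: diff_divide_distrib)
    ultimately show "x - 1 / real (Suc n) \<le> grid_round n x" by simp
  qed
  show "\<forall>\<^sub>F n in sequentially. grid_round n x \<le> x"
  proof (intro always_eventually allI)
    fix n
    have "real_of_int \<lfloor>x * real (Suc n)\<rfloor> \<le> x * real (Suc n)" by linarith
    then show "grid_round n x \<le> x" unfolding grid_round_def by (simp add: field_simps)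
  qed
  show "(\<lambda>n. x) \<longlonglongrightarrow> x" by simp
  have "(\<lambda>n. 1 / real (Suc n)) \<longlonglongrightarrow> 0" using LIMSEQ_Suc[OF lim_inverse_n'] by simp
  then show "(\<lambda>n. x - 1 / real (Suc n)) \<longlonglongrightarrow> x" using tendsto_diff[of "\<lambda>n. x" x sequentially] by fastforce
qed

lemma reg_min_restrict: "reg_min K m B c = reg_min K m B (\<lambda>k. if k < K then c k else 0)"
  unfolding reg_min_def reg_obj_def by simp

lemma measurable_map_upt:
  assumes "\<And>k. k < K \<Longrightarrow> q k \<in> M \<rightarrow>\<^sub>M count_space (UNIV :: 'a::countable set)"
  shows "(\<lambda>\<omega>. map (\<lambda>k. q k \<omega>) [0..<K]) \<in> M \<rightarrow>\<^sub>M count_space UNIV"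
  using assms
proof (induction K)
  case 0 then show ?case by simp
next
  case (Suc K)
  have h: "(\<lambda>\<omega>. map (\<lambda>k. q k \<omega>) [0..<K]) \<in> M \<rightarrow>\<^sub>M count_space UNIV" using Suc by simp
  have "(\<lambda>\<omega>. (\<lambda>l. l @ [q K \<omega>]) (map (\<lambda>k. q k \<omega>) [0..<K]) ) \<in> M \<rightarrow>\<^sub>M count_space UNIV"
  proof (rule measurable_compose_countable'[OF _ h])
    fix l :: "'a list"
    show "(\<lambda>\<omega>. l @ [q K \<omega>]) \<in> M \<rightarrow>\<^sub>M count_space UNIV"
      by (rule measurable_compose[OF Suc.prems[of K]]) auto
  qed auto
  then show ?case by simp
qed

text \<open>The minimiser, a \<open>SOME\<close>-term, is continuous in its parameters; so it is the pointwise
  limit of its values at grid-rounded parameters, each of which ranges over a countable set.\<close>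

lemma borel_measurable_reg_min:
  assumes f: "f \<in> borel_measurable M" and fpos: "\<And>\<omega>. \<omega> \<in> space M \<Longrightarrow> 0 < f \<omega>"
    and g: "\<And>k. k < K \<Longrightarrow> (\<lambda>\<omega>. g \<omega> k) \<in> borel_measurable M"
  shows "(\<lambda>\<omega>. reg_min K m (f \<omega>) (g \<omega>) j) \<in> borel_measurable M"
proof (rule borel_measurable_LIMSEQ_real[where u="\<lambda>n \<omega>. reg_min K m (grid_round n (f \<omega>)) (\<lambda>k. if k < K then grid_round n (g \<omega> k) else 0) j"])
  fix \<omega> assume w: "\<omega> \<in> space M"
  have "(\<lambda>n. reg_min K m (grid_round n (f \<omega>)) (\<lambda>k. if k < K then grid_round n (g \<omega> k) else 0) j) \<longlonglongrightarrow>
        reg_min K m (f \<omega>) (\<lambda>k. if k < K then g \<omega> k else 0) j"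
    by (rule tendsto_reg_min) (auto simp: grid_round_tendsto fpos[OF w])
  then show "(\<lambda>n. reg_min K m (grid_round n (f \<omega>)) (\<lambda>k. if k < K then grid_round n (g \<omega> k) else 0) j) \<longlonglongrightarrow> reg_min K m (f \<omega>) (g \<omega>) j"
    by (subst reg_min_restrict) simp
next
  fix n
  define r where "r = real (Suc n)"
  define i where "i = (\<lambda>\<omega>. (\<lfloor>f \<omega> * r\<rfloor>, map (\<lambda>k. \<lfloor>g \<omega> k * r\<rfloor>) [0..<K]))"
  define G where "G = (\<lambda>(z::int, l::int list). reg_min K m (real_of_int z / r) (\<lambda>k. if k < K then real_of_int (l ! k) / r else 0) j)"
  have fl: "(\<lambda>\<omega>. \<lfloor>h \<omega>\<rfloor>) \<in> M \<rightarrow>\<^sub>M count_space UNIV" if "h \<in> borel_measurable M" for h :: "_ \<Rightarrow> real"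
    by (rule measurable_compose[OF that measurable_real_floor])
  have im: "i \<in> M \<rightarrow>\<^sub>M count_space UNIV" unfolding i_def
  proof (rule measurable_compose_countable'[where f="\<lambda>z \<omega>. (z, map (\<lambda>k. \<lfloor>g \<omega> k * r\<rfloor>) [0..<K])"])
    fix z :: int
    have "(\<lambda>\<omega>. map (\<lambda>k. \<lfloor>g \<omega> k * r\<rfloor>) [0..<K]) \<in> M \<rightarrow>\<^sub>M count_space UNIV"
      by (rule measurable_map_upt, rule fl) (use g in simp)
    then show "(\<lambda>\<omega>. (z, map (\<lambda>k. \<lfloor>g \<omega> k * r\<rfloor>) [0..<K])) \<in> M \<rightarrow>\<^sub>M count_space UNIV"
      by (rule measurable_compose) auto
    show "(\<lambda>\<omega>. \<lfloor>f \<omega> * r\<rfloor>) \<in> M \<rightarrow>\<^sub>M count_space UNIV" by (rule fl) (use f in simp)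
  qed simp
  have "(\<lambda>\<omega>. G (i \<omega>)) \<in> borel_measurable M" by (rule measurable_compose[OF im]) simp
  moreover have "G (i \<omega>) = reg_min K m (grid_round n (f \<omega>)) (\<lambda>k. if k < K then grid_round n (g \<omega> k) else 0) j" for \<omega>
    unfolding G_def i_def grid_round_def r_def by (auto intro!: arg_cong[where f="\<lambda>c. reg_min K m _ c j"])
  ultimately show "(\<lambda>\<omega>. reg_min K m (grid_round n (f \<omega>)) (\<lambda>k. if k < K then grid_round n (g \<omega> k) else 0) j) \<in> borel_measurable M" by simp
qed

section \<open>An inequality for adaptive learning rates\<close>

lemma sqrt_increment_bound:
  fixes x S c :: real
  assumes x: "0 \<le> x" "x \<le> S" and S: "0 < S" and c: "0 < c"
  shows "x / sqrt (1 + S / c) \<le> 3 * sqrt c * (sqrt (S + x) - sqrt S)"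
proof -
  define a where "a = sqrt S"
  define b where "b = sqrt (S + x)"
  have a: "0 < a" unfolding a_def using S by simp
  have ab: "a \<le> b" unfolding a_def b_def using x by simp
  have b2: "b \<le> 2 * a"
  proof -
    have "S + x \<le> 4 * S" using x S by simp
    then have "sqrt (S + x) \<le> sqrt (4 * S)" by simp
    also have "sqrt (4 * S) = 2 * sqrt S" by (simp add: real_sqrt_mult)
    finally show ?thesis unfolding a_def b_def .
  qed
  have xe: "x = (b - a) * (b + a)"
    unfolding a_def b_def using x S by (simp add: algebra_simps)
  have "sqrt (S / c) \<le> sqrt (1 + S / c)" by simp
  moreover have "sqrt (S / c) = a / sqrt c" unfolding a_def by (simp add: real_sqrt_divide)
  ultimately have den: "a / sqrt c \<le> sqrt (1 + S / c)" by simp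
  have "x / sqrt (1 + S / c) \<le> x / (a / sqrt c)"
    by (rule divide_left_mono[OF den]) (use x a c S in \<open>auto intro!: mult_pos_pos divide_pos_pos add_pos_nonneg\<close>)
  also have "\<dots> = sqrt c * ((b - a) * (b + a) / a)" using xe by simp
  also have "(b - a) * (b + a) / a \<le> 3 * (b - a)"
  proof -
    have "(b - a) * (b + a) \<le> (b - a) * (3 * a)" using ab b2 by (intro mult_left_mono) auto
    then have "(b - a) * (b + a) / a \<le> (b - a) * (3 * a) / a" using a by (intro divide_right_mono) auto
    also have "\<dots> = 3 * (b - a)" using a by simp
    finally show ?thesis .
  qed
  then have "sqrt c * ((b - a) * (b + a) / a) \<le> sqrt c * (3 * (b - a))" using c by (intro mult_left_mono) auto
  finally show ?thesis unfolding a_def b_def by (simp add: algebra_simps)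
qed

lemma adaptive_weight_sum_telescope:
  fixes x :: "nat \<Rightarrow> real" and B c :: real
  assumes c: "0 < c" and B: "0 < B" and x1: "x 1 = B" and xb: "\<And>s. 1 \<le> s \<Longrightarrow> 0 \<le> x s \<and> x s \<le> B"
  shows "(\<Sum>t=1..n. x (t+1) / sqrt (1 + (\<Sum>s=1..t. x s) / c))
    \<le> 3 * sqrt c * (sqrt (\<Sum>s=1..n+1. x s) - sqrt B)"
proof (induction n)
  case (Suc n)
  define S where "S = (\<Sum>s=1..Suc n. x s)"
  have "B \<le> S" unfolding S_def x1[symmetric] using xb by (intro member_le_sum) auto
  then have "x (n+2) / sqrt (1 + S / c) \<le> 3 * sqrt c * (sqrt (S + x (n+2)) - sqrt S)"
    by (intro sqrt_increment_bound) (use xb[of "n+2"] B c in auto)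
  moreover have "S + x (n+2) = (\<Sum>s=1..Suc n+1. x s)" unfolding S_def by simp
  ultimately show ?case using Suc by (simp add: S_def algebra_simps)
qed (use x1 in simp)

lemma adaptive_weight_sum_bound:
  fixes x :: "nat \<Rightarrow> real" and B c :: real
  assumes c: "0 < c" and x1: "x 1 = B" and xb: "\<And>s. 1 \<le> s \<Longrightarrow> 0 \<le> x s \<and> x s \<le> B" and T: "1 \<le> T"
  shows "(\<Sum>t=1..T. x (t+1) / sqrt (1 + (\<Sum>s=1..t. x s) / c)) \<le> 6 * sqrt c * sqrt (\<Sum>s=1..T. x s)"
proof (cases "B = 0")
  case True
  then have "x s = 0" if "1 \<le> s" for s using xb[OF that] by simp
  then show ?thesis by simp
next
  case False
  then have B: "0 < B" using xb[of 1] by simp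
  define S where "S = (\<Sum>s=1..T. x s)"
  have "B \<le> S" unfolding S_def x1[symmetric] using xb T by (intro member_le_sum) auto
  then have "(\<Sum>s=1..T+1. x s) \<le> 4 * S" using xb[of "T+1"] by (simp add: S_def)
  then have "sqrt (\<Sum>s=1..T+1. x s) \<le> 2 * sqrt S"
    using real_sqrt_le_mono[of _ "4 * S"] by (simp add: real_sqrt_mult)
  then have "3 * sqrt c * sqrt (\<Sum>s=1..T+1. x s) \<le> 6 * sqrt c * sqrt S"
    using c by (simp add: mult_left_mono)
  moreover have "0 \<le> sqrt c * sqrt B" using c B by simp
  ultimately have "3 * sqrt c * (sqrt (\<Sum>s=1..T+1. x s) - sqrt B) \<le> 6 * sqrt c * sqrt S"
    unfolding right_diff_distrib by linarith
  moreover have "(\<Sum>t=1..T. x (t+1) / sqrt (1 + (\<Sum>s=1..t. x s) / c))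
      \<le> 3 * sqrt c * (sqrt (\<Sum>s=1..T+1. x s) - sqrt B)"
    by (rule adaptive_weight_sum_telescope[where x=x, OF c B x1]) (rule xb)
  ultimately show ?thesis unfolding S_def by linarith
qed

lemma sqrt_le_amgm: assumes "0 < a" "0 \<le> S" shows "sqrt S \<le> S / (2 * a) + a / 2"
proof -
  have "0 \<le> (sqrt S - a)^2" by simp
  then have "2 * a * sqrt S \<le> S + a^2" using assms by (simp add: power2_eq_square algebra_simps)
  then have "sqrt S \<le> (S + a^2) / (2 * a)" using assms by (simp add: field_simps)
  also have "\<dots> = S / (2 * a) + a / 2" using assms by (simp add: field_simps power2_eq_square)
  finally show ?thesis .
qed

section \<open>Measurable spaces of histories and of sample lists\<close>

definition coord_measure :: "('a \<Rightarrow> real) set \<Rightarrow> 'a measure" where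
  "coord_measure F = sigma UNIV {f -` B | f B. f \<in> F \<and> B \<in> sets borel}"

lemma coord_measure_space[simp]: "space (coord_measure F) = UNIV"
  unfolding coord_measure_def by (rule space_measure_of) auto

lemma coord_measure_sets: "sets (coord_measure F) = sigma_sets UNIV {f -` B | f B. f \<in> F \<and> B \<in> sets borel}"
  unfolding coord_measure_def by (rule sets_measure_of) auto

lemma coord_measure_coord: "f \<in> F \<Longrightarrow> f \<in> borel_measurable (coord_measure F)"
  unfolding measurable_def coord_measure_sets by (auto intro!: sigma_sets.Basic)

lemma measurable_into_coord_measure:
  assumes "\<And>f. f \<in> F \<Longrightarrow> (\<lambda>\<omega>. f (g \<omega>)) \<in> borel_measurable M"
  shows "g \<in> M \<rightarrow>\<^sub>M coord_measure F"
  unfolding coord_measure_def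
proof (rule measurable_measure_of)
  fix A assume "A \<in> {f -` B | f B. f \<in> F \<and> B \<in> sets borel}"
  then obtain f B where fB: "A = f -` B" "f \<in> F" "B \<in> sets borel" by blast
  have "(\<lambda>\<omega>. f (g \<omega>)) -` B \<inter> space M \<in> sets M" using assms[OF fB(2)] fB(3) by (rule measurable_sets)
  then show "g -` A \<inter> space M \<in> sets M" using fB(1) by (simp add: vimage_def)
qed auto

lemma measurable_nat_count_space:
  assumes "(\<lambda>\<omega>. real (q \<omega>)) \<in> borel_measurable M"
  shows "q \<in> M \<rightarrow>\<^sub>M count_space UNIV"
proof -
  have "(\<lambda>\<omega>. nat \<lfloor>real (q \<omega>)\<rfloor>) \<in> M \<rightarrow>\<^sub>M count_space UNIV"
    by (rule measurable_compose[OF measurable_compose[OF assms measurable_real_floor]]) auto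
  then show ?thesis by simp
qed

definition hist_coords :: "(hist \<Rightarrow> real) set" where
  "hist_coords = {\<lambda>h. real (length h)} \<union> {\<lambda>h. fst (h!s) i | s i. True} \<union> {\<lambda>h. snd (h!s) k i | s k i. True}"

definition histM :: "hist measure" where "histM = coord_measure hist_coords"

definition sample_coords :: "(sample list \<Rightarrow> real) set" where
  "sample_coords = {\<lambda>ys. real (length ys)} \<union> {\<lambda>ys. fst (ys!j) i | j i. True} \<union> {\<lambda>ys. if k \<in> snd (ys!j) then 1 else 0 | j k. True}"

definition samplesM :: "sample list measure" where "samplesM = coord_measure sample_coords"

lemma histM_space[simp]: "space histM = UNIV" and samplesM_space[simp]: "space samplesM = UNIV"
  by (simp_all add: histM_def samplesM_def)

lemma histM_length_real[measurable]: "(\<lambda>h. real (length h)) \<in> borel_measurable histM"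
  unfolding histM_def by (rule coord_measure_coord) (auto simp: hist_coords_def)

lemma histM_ctx[measurable]: "(\<lambda>h. fst (h!s) i) \<in> borel_measurable histM"
  unfolding histM_def by (rule coord_measure_coord) (auto simp: hist_coords_def)

lemma histM_theta[measurable]: "(\<lambda>h. snd (h!s) k i) \<in> borel_measurable histM"
  unfolding histM_def by (rule coord_measure_coord) (unfold hist_coords_def, blast)

lemma samplesM_length_real[measurable]: "(\<lambda>ys. real (length ys)) \<in> borel_measurable samplesM"
  unfolding samplesM_def by (rule coord_measure_coord) (unfold sample_coords_def, blast)

lemma samplesM_ctx[measurable]: "(\<lambda>ys. fst (ys!j) i) \<in> borel_measurable samplesM"
  unfolding samplesM_def by (rule coord_measure_coord) (unfold sample_coords_def, blast)

lemma samplesM_action[measurable]: "(\<lambda>ys. if k \<in> snd (ys!j) then 1 else 0 :: real) \<in> borel_measurable samplesM"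
  unfolding samplesM_def by (rule coord_measure_coord) (unfold sample_coords_def, blast)

lemma histM_length[measurable]: "length \<in> histM \<rightarrow>\<^sub>M count_space UNIV"
  by (rule measurable_nat_count_space) (rule histM_length_real)

lemma samplesM_length[measurable]: "length \<in> samplesM \<rightarrow>\<^sub>M count_space UNIV"
  by (rule measurable_nat_count_space) (rule samplesM_length_real)

lemma measurable_into_histM:
  assumes "(\<lambda>\<omega>. real (length (g \<omega>))) \<in> borel_measurable M"
    "\<And>s i. (\<lambda>\<omega>. fst (g \<omega> ! s) i) \<in> borel_measurable M"
    "\<And>s k i. (\<lambda>\<omega>. snd (g \<omega> ! s) k i) \<in> borel_measurable M"
  shows "g \<in> M \<rightarrow>\<^sub>M histM"
  unfolding histM_def by (rule measurable_into_coord_measure) (auto simp: hist_coords_def assms)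

lemma measurable_into_samplesM:
  assumes "(\<lambda>\<omega>. real (length (g \<omega>))) \<in> borel_measurable M"
    "\<And>j i. (\<lambda>\<omega>. fst (g \<omega> ! j) i) \<in> borel_measurable M"
    "\<And>j k. (\<lambda>\<omega>. if k \<in> snd (g \<omega> ! j) then 1 else 0 :: real) \<in> borel_measurable M"
  shows "g \<in> M \<rightarrow>\<^sub>M samplesM"
  unfolding samplesM_def by (rule measurable_into_coord_measure) (auto simp: sample_coords_def assms)

lemma measurable_length_histM:
  assumes "H \<in> M \<rightarrow>\<^sub>M histM" shows "(\<lambda>\<omega>. length (H \<omega>)) \<in> M \<rightarrow>\<^sub>M count_space UNIV"
  using measurable_compose[OF assms histM_length] by simp

lemma borel_measurable_nth_snoc:
  assumes L: "(\<lambda>\<omega>. length (xs \<omega>)) \<in> M \<rightarrow>\<^sub>M count_space UNIV"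
    and xs: "(\<lambda>\<omega>. f (xs \<omega> ! s)) \<in> borel_measurable M" and y: "(\<lambda>\<omega>. f (y \<omega>)) \<in> borel_measurable M"
  shows "(\<lambda>\<omega>. f ((xs \<omega> @ [y \<omega>]) ! s) :: real) \<in> borel_measurable M"
proof -
  let ?g = "\<lambda>l \<omega>. if s < l then f (xs \<omega> ! s) else if s = l then f (y \<omega>) else f ([] ! (s - l - 1))"
  have "(\<lambda>\<omega>. ?g (length (xs \<omega>)) \<omega>) \<in> borel_measurable M"
    by (rule measurable_compose_countable'[OF _ L]) (use xs y in simp_all)
  moreover have "f ((xs \<omega> @ [y \<omega>]) ! s) = ?g (length (xs \<omega>)) \<omega>" for \<omega>
    by (simp add: nth_append nth_Cons')
  ultimately show ?thesis by simp
qed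

lemma measurable_histM_snoc:
  assumes H: "H \<in> M \<rightarrow>\<^sub>M histM" and X: "\<And>i. (\<lambda>\<omega>. X \<omega> i) \<in> borel_measurable M"
    and Th: "\<And>k i. (\<lambda>\<omega>. Th \<omega> k i) \<in> borel_measurable M"
  shows "(\<lambda>\<omega>. H \<omega> @ [(X \<omega>, Th \<omega>)]) \<in> M \<rightarrow>\<^sub>M histM"
proof (rule measurable_into_histM)
  have L: "(\<lambda>\<omega>. length (H \<omega>)) \<in> M \<rightarrow>\<^sub>M count_space UNIV" by (rule measurable_length_histM[OF H])
  show "(\<lambda>\<omega>. real (length (H \<omega> @ [(X \<omega>, Th \<omega>)]))) \<in> borel_measurable M"
    using measurable_compose[OF H histM_length_real] by simp
  show "(\<lambda>\<omega>. fst ((H \<omega> @ [(X \<omega>, Th \<omega>)]) ! s) i) \<in> borel_measurable M" for s i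
    by (rule borel_measurable_nth_snoc[OF L, where f="\<lambda>e. fst e i"]) (use measurable_compose[OF H histM_ctx] X in simp_all)
  show "(\<lambda>\<omega>. snd ((H \<omega> @ [(X \<omega>, Th \<omega>)]) ! s) k i) \<in> borel_measurable M" for s k i
    by (rule borel_measurable_nth_snoc[OF L, where f="\<lambda>e. snd e k i"]) (use measurable_compose[OF H histM_theta] Th in simp_all)
qed

lemma measurable_samplesM_snoc:
  assumes Y: "Y \<in> M \<rightarrow>\<^sub>M samplesM" and X: "\<And>i. (\<lambda>\<omega>. X \<omega> i) \<in> borel_measurable M"
  shows "(\<lambda>\<omega>. Y \<omega> @ [(X \<omega>, A)]) \<in> M \<rightarrow>\<^sub>M samplesM"
proof (rule measurable_into_samplesM)
  have L: "(\<lambda>\<omega>. length (Y \<omega>)) \<in> M \<rightarrow>\<^sub>M count_space UNIV"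
    using measurable_compose[OF Y samplesM_length] by simp
  show "(\<lambda>\<omega>. real (length (Y \<omega> @ [(X \<omega>, A)]))) \<in> borel_measurable M"
    using measurable_compose[OF Y samplesM_length_real] by simp
  show "(\<lambda>\<omega>. fst ((Y \<omega> @ [(X \<omega>, A)]) ! j) i) \<in> borel_measurable M" for j i
    by (rule borel_measurable_nth_snoc[OF L, where f="\<lambda>e. fst e i"]) (use measurable_compose[OF Y samplesM_ctx] X in simp_all)
  show "(\<lambda>\<omega>. if k \<in> snd ((Y \<omega> @ [(X \<omega>, A)]) ! j) then 1 else 0 :: real) \<in> borel_measurable M" for j k
    by (rule borel_measurable_nth_snoc[OF L, where f="\<lambda>e. if k \<in> snd e then 1 else 0"])
       (use measurable_compose[OF Y samplesM_action] in simp_all)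
qed

lemma measurable_samplesM_Cons:
  assumes Y: "Y \<in> M \<rightarrow>\<^sub>M samplesM" and X: "\<And>i. (\<lambda>\<omega>. X \<omega> i) \<in> borel_measurable M"
  shows "(\<lambda>\<omega>. (X \<omega>, A) # Y \<omega>) \<in> M \<rightarrow>\<^sub>M samplesM"
proof (rule measurable_into_samplesM)
  show "(\<lambda>\<omega>. real (length ((X \<omega>, A) # Y \<omega>))) \<in> borel_measurable M"
    using measurable_compose[OF Y samplesM_length_real] by simp
  show "(\<lambda>\<omega>. fst (((X \<omega>, A) # Y \<omega>) ! j) i) \<in> borel_measurable M" for j i
    using measurable_compose[OF Y samplesM_ctx] X by (cases j) simp_all
  show "(\<lambda>\<omega>. if k \<in> snd (((X \<omega>, A) # Y \<omega>) ! j) then 1 else 0 :: real) \<in> borel_measurable M" for j k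
    using measurable_compose[OF Y samplesM_action] by (cases j) simp_all
qed

lemma context_coord_measurable:
  fixes D :: "ctx measure"
  assumes "sets D = sets (\<Pi>\<^sub>M i\<in>{..<d}. lborel)"
  shows "(\<lambda>x. x i) \<in> borel_measurable D"
proof -
  have "(\<lambda>x. x i) \<in> borel_measurable (\<Pi>\<^sub>M i\<in>{..<d}. (lborel :: real measure))"
  proof (cases "i < d")
    case True
    then show ?thesis using measurable_component_singleton[of i "{..<d}" "\<lambda>_. lborel"]
      by (simp add: measurable_lborel1)
  next
    case False
    have "(\<lambda>x. undefined) \<in> borel_measurable (\<Pi>\<^sub>M i\<in>{..<d}. (lborel :: real measure))" by simp
    then show ?thesis by (rule measurable_cong[THEN iffD1, rotated]) (use False in \<open>auto simp: space_PiM PiE_def extensional_def\<close>)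
  qed
  then show ?thesis by (subst measurable_cong_sets[OF assms refl])
qed

lemma loss_measurable:
  fixes D :: "ctx measure"
  assumes "sets D = sets (\<Pi>\<^sub>M i\<in>{..<d}. lborel)" "losses_ok d K loss"
  shows "(\<lambda>x. loss t x k) \<in> borel_measurable D"
proof -
  have "(\<lambda>x. loss t x k) \<in> borel_measurable (\<Pi>\<^sub>M i\<in>{..<d}. lborel)" using assms(2) unfolding losses_ok_def by blast
  then show ?thesis by (subst measurable_cong_sets[OF assms(1) refl])
qed

definition cum_loss :: "nat \<Rightarrow> (nat \<Rightarrow> ctx) list \<Rightarrow> ctx \<Rightarrow> nat \<Rightarrow> real" where
  "cum_loss d th x k = (\<Sum>s<length th. ip d x ((th!s) k))"

lemma Abar_eq_reg_min: "Abar K m d \<eta> th x = reg_min K m (1/\<eta>) (cum_loss d th x)"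
proof -
  have "objf K d \<eta> th x a = reg_obj K (1/\<eta>) (cum_loss d th x) a" for a
    unfolding objf_def reg_obj_def cum_loss_def by (simp add: sum.swap[of _ "{..<K}"] sum_distrib_right)
  then show ?thesis unfolding Abar_def reg_min_def by simp
qed

lemma sum_lessThan_min: "(\<Sum>s<min l t. f s) = (\<Sum>s<t. if s < l then f s else (0::real))" for t l :: nat
proof (induction t)
  case (Suc t)
  show ?case
  proof (cases "t < l")
    case True
    then have "min l (Suc t) = Suc (min l t)" by (simp add: min_def)
    then show ?thesis using Suc True by simp
  next
    case False
    then have "min l (Suc t) = min l t" by (simp add: min_def)
    then show ?thesis using Suc False by simp
  qed
qed simp

lemma cum_loss_take: "cum_loss d (map snd (take t h)) x k = (\<Sum>s<t. if s < length h then ip d x (snd (h!s) k) else 0)"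
proof -
  have "cum_loss d (map snd (take t h)) x k = (\<Sum>s<min (length h) t. ip d x (snd (h!s) k))"
    unfolding cum_loss_def by (intro sum.cong) auto
  then show ?thesis by (simp add: sum_lessThan_min)
qed

lemma measurable_cum_loss:
  assumes H: "H \<in> M \<rightarrow>\<^sub>M histM" and X: "\<And>i. (\<lambda>\<omega>. X \<omega> i) \<in> borel_measurable M"
  shows "(\<lambda>\<omega>. cum_loss d (map snd (take t (H \<omega>))) (X \<omega>) k) \<in> borel_measurable M"
proof -
  have L: "(\<lambda>\<omega>. length (H \<omega>)) \<in> M \<rightarrow>\<^sub>M count_space UNIV" by (rule measurable_length_histM[OF H])
  have th: "(\<lambda>\<omega>. snd (H \<omega> ! s) k i) \<in> borel_measurable M" for s i
    using measurable_compose[OF H histM_theta] by simp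
  have ip: "(\<lambda>\<omega>. ip d (X \<omega>) (snd (H \<omega> ! s) k)) \<in> borel_measurable M" for s
    unfolding ip_def using X th by measurable
  have p: "Measurable.pred M (\<lambda>\<omega>. s < length (H \<omega>))" for s
    using L by measurable
  show ?thesis unfolding cum_loss_take using ip p by measurable
qed

lemma measurable_ent_reg_min:
  assumes f: "f \<in> borel_measurable M" and fpos: "\<And>\<omega>. \<omega> \<in> space M \<Longrightarrow> 0 < f \<omega>"
    and g: "\<And>k. k < K \<Longrightarrow> (\<lambda>\<omega>. g \<omega> k) \<in> borel_measurable M"
  shows "(\<lambda>\<omega>. ent K (reg_min K m (f \<omega>) (g \<omega>))) \<in> borel_measurable M"
proof -
  have "(\<lambda>\<omega>. xlnx (reg_min K m (f \<omega>) (g \<omega>) k)) \<in> borel_measurable M" for k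
    using measurable_compose[OF borel_measurable_reg_min[OF f fpos g] borel_measurable_xlnx] by simp
  then show ?thesis unfolding ent_eq_xlnx by measurable
qed

lemma bp_Suc_reg_min: "bp D d K m T h (Suc t) =
   (let b = fst (bp D d K m T h t);
        S = snd (bp D d K m T h t);
        a = reg_min K m (max (max 2 (cc2 D d K * ln (real T))) b) (cum_loss d (map snd (take t h)) (fst (h ! t)));
        S' = S + ent K a
    in (b + cc1 D d K m T / sqrt (1 + S' / (real m * ln (real K / real m))), S'))"
  unfolding bp.simps Let_def Abar_eq_reg_min by simp

lemma measurable_bp:
  assumes H: "H \<in> M \<rightarrow>\<^sub>M histM"
  shows "(\<lambda>\<omega>. fst (bp D d K m T (H \<omega>) t)) \<in> borel_measurable M \<and> (\<lambda>\<omega>. snd (bp D d K m T (H \<omega>) t)) \<in> borel_measurable M"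
proof (induction t)
  case 0 then show ?case by simp
next
  case (Suc t)
  have b: "(\<lambda>\<omega>. fst (bp D d K m T (H \<omega>) t)) \<in> borel_measurable M" and S: "(\<lambda>\<omega>. snd (bp D d K m T (H \<omega>) t)) \<in> borel_measurable M"
    using Suc by auto
  have X: "(\<lambda>\<omega>. fst (H \<omega> ! t) i) \<in> borel_measurable M" for i using measurable_compose[OF H histM_ctx] by simp
  have e: "(\<lambda>\<omega>. ent K (reg_min K m (max (max 2 (cc2 D d K * ln (real T))) (fst (bp D d K m T (H \<omega>) t)))
            (cum_loss d (map snd (take t (H \<omega>))) (fst (H \<omega> ! t))))) \<in> borel_measurable M"
    by (rule measurable_ent_reg_min) (use b measurable_cum_loss[OF H X] in auto)
  show ?case unfolding bp_Suc_reg_min Let_def using b S e by simp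
qed

lemma beta_pos: "0 < beta D d K m T h t" unfolding beta_def by simp

lemma Abar_t_eq_reg_min: "Abar_t D d K m T h t x = reg_min K m (beta D d K m T h t) (cum_loss d (map snd (take (t-1) h)) x)"
  unfolding Abar_t_def eta_def Abar_eq_reg_min by simp

lemma measurable_beta:
  assumes H: "H \<in> M \<rightarrow>\<^sub>M histM"
  shows "(\<lambda>\<omega>. beta D d K m T (H \<omega>) t) \<in> borel_measurable M"
proof -
  have "(\<lambda>\<omega>. fst (bp D d K m T (H \<omega>) (t-1))) \<in> borel_measurable M" using measurable_bp[OF H] by blast
  then show ?thesis unfolding beta_def betap_def by (intro borel_measurable_max) simp_all
qed

lemma measurable_Abar_t:
  assumes H: "H \<in> M \<rightarrow>\<^sub>M histM" and X: "\<And>i. (\<lambda>\<omega>. X \<omega> i) \<in> borel_measurable M"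
  shows "(\<lambda>\<omega>. Abar_t D d K m T (H \<omega>) t (X \<omega>) j) \<in> borel_measurable M"
  unfolding Abar_t_eq_reg_min by (rule borel_measurable_reg_min) (use measurable_beta[OF H] beta_pos measurable_cum_loss[OF H X] in auto)

lemma measurable_ent_Abar_t:
  assumes H: "H \<in> M \<rightarrow>\<^sub>M histM" and X: "\<And>i. (\<lambda>\<omega>. X \<omega> i) \<in> borel_measurable M"
  shows "(\<lambda>\<omega>. ent K (Abar_t D d K m T (H \<omega>) t (X \<omega>))) \<in> borel_measurable M"
  unfolding Abar_t_eq_reg_min by (rule measurable_ent_reg_min) (use measurable_beta[OF H] beta_pos measurable_cum_loss[OF H X] in auto)

lemma measurable_Abar_t_PiM:
  assumes H: "H \<in> M \<rightarrow>\<^sub>M histM" and X: "\<And>i. (\<lambda>\<omega>. X \<omega> i) \<in> borel_measurable M"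
  shows "(\<lambda>\<omega>. Abar_t D d K m T (H \<omega>) t (X \<omega>)) \<in> M \<rightarrow>\<^sub>M (\<Pi>\<^sub>M i\<in>(UNIV::nat set). lborel)"
proof -
  have "(\<lambda>\<omega> j. Abar_t D d K m T (H \<omega>) t (X \<omega>) j) \<in> M \<rightarrow>\<^sub>M (\<Pi>\<^sub>M i\<in>(UNIV::nat set). lborel)"
    by (rule measurable_PiM_single') (use measurable_Abar_t[OF H X] in \<open>auto simp: measurable_lborel2\<close>)
  then show ?thesis by simp
qed

lemma bernoulli_pmf_clamp: "bernoulli_pmf p = bernoulli_pmf (min 1 (max 0 p))"
  by (rule pmf_eqI) (simp add: bernoulli_pmf.rep_eq)

lemma pmf_pol: "pmf (pol D d K m T p h t x) S =
   pmf (pmf_of_set (basisE K)) S * min 1 (max 0 (gam D d K m T h t)) +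
   pmf (p t (Abar_t D d K m T h t x)) S * (1 - min 1 (max 0 (gam D d K m T h t)))"
  unfolding pol_def by (subst bernoulli_pmf_clamp) (simp add: pmf_bind)

lemma measurable_pmf_pol:
  assumes H: "H \<in> M \<rightarrow>\<^sub>M histM" and X: "\<And>i. (\<lambda>\<omega>. X \<omega> i) \<in> borel_measurable M"
    and dec: "decomp_ok K m p"
  shows "(\<lambda>\<omega>. pmf (pol D d K m T p (H \<omega>) t (X \<omega>)) S) \<in> borel_measurable M"
proof -
  have pm: "(\<lambda>a. pmf (p t a) S) \<in> borel_measurable (\<Pi>\<^sub>M i\<in>(UNIV::nat set). lborel)"
    using dec unfolding decomp_ok_def by blast
  have 1: "(\<lambda>\<omega>. pmf (p t (Abar_t D d K m T (H \<omega>) t (X \<omega>))) S) \<in> borel_measurable M"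
    using measurable_compose[OF measurable_Abar_t_PiM[OF H X] pm] .
  have 2: "(\<lambda>\<omega>. gam D d K m T (H \<omega>) t) \<in> borel_measurable M"
    unfolding gam_def eta_def using measurable_beta[OF H] by measurable
  show ?thesis unfolding pmf_pol using 1 2 by measurable
qed

lemma basisE_acts: "1 \<le> m \<Longrightarrow> basisE K \<subseteq> acts K m"
  unfolding basisE_def acts_def by auto

lemma Abar_t_convA: "Abar_t D d K m T h t x \<in> convA K m"
  unfolding Abar_t_eq_reg_min using reg_min_is_min by blast

lemma set_pmf_pol:
  assumes "0 < K" "1 \<le> m" "decomp_ok K m p"
  shows "set_pmf (pol D d K m T p h t x) \<subseteq> acts K m"
proof -
  have fin: "finite (basisE K)" "basisE K \<noteq> {}" using assms(1) unfolding basisE_def by auto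
  have a: "set_pmf (p t (Abar_t D d K m T h t x)) \<subseteq> acts K m"
    using assms(3) Abar_t_convA unfolding decomp_ok_def by blast
  have b: "set_pmf (pmf_of_set (basisE K)) \<subseteq> acts K m"
    using set_pmf_of_set[OF fin(2,1)] basisE_acts[OF assms(2)] by simp
  show ?thesis unfolding pol_def set_bind_pmf using a b by (auto split: if_splits)
qed

lemma measurable_Mt:
  assumes H: "H \<in> M \<rightarrow>\<^sub>M histM"
  shows "(\<lambda>\<omega>. Mt D d K m T (H \<omega>) t) \<in> M \<rightarrow>\<^sub>M count_space UNIV"
  unfolding Mt_def eta_def
  using measurable_compose[OF measurable_compose[OF measurable_beta[OF H] measurable_real_ceiling], of nat]
  by simp

lemma Cmat_snoc: "Cmat d k (ys @ [y]) = mmul d (Cmat d k ys) (\<lambda>i j. idm i j - avec (snd y) k * fst y i * fst y j / 2)"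
  by (cases y) (simp add: Cmat_def)

lemma measurable_Cmat:
  assumes Y: "Y \<in> M \<rightarrow>\<^sub>M samplesM"
  shows "(\<lambda>\<omega>. Cmat d k (take n (Y \<omega>)) i j) \<in> borel_measurable M"
proof (induction n arbitrary: i j)
  case 0 then show ?case by (simp add: Cmat_def)
next
  case (Suc n)
  have L: "(\<lambda>\<omega>. length (Y \<omega>)) \<in> M \<rightarrow>\<^sub>M count_space UNIV" using measurable_compose[OF Y samplesM_length] by simp
  have Xm: "(\<lambda>\<omega>. fst (Y \<omega> ! n) l) \<in> borel_measurable M" for l using measurable_compose[OF Y samplesM_ctx] by simp
  have Am: "(\<lambda>\<omega>. avec (snd (Y \<omega> ! n)) k) \<in> borel_measurable M" unfolding avec_def using measurable_compose[OF Y samplesM_action] by simp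
  have e: "Cmat d k (take (Suc n) (Y \<omega>)) i j = (if n < length (Y \<omega>) then
      (\<Sum>l<d. Cmat d k (take n (Y \<omega>)) i l * (idm l j - avec (snd (Y \<omega> ! n)) k * fst (Y \<omega> ! n) l * fst (Y \<omega> ! n) j / 2))
      else Cmat d k (take n (Y \<omega>)) i j)" for \<omega>
    by (simp add: take_Suc_conv_app_nth Cmat_snoc mmul_def)
  have p: "Measurable.pred M (\<lambda>\<omega>. n < length (Y \<omega>))" using L by measurable
  show ?case unfolding e using p Suc Xm Am by measurable
qed

lemma measurable_Sigplus:
  assumes Y: "Y \<in> M \<rightarrow>\<^sub>M samplesM"
  shows "(\<lambda>\<omega>. Sigplus d k (Y \<omega>) i j) \<in> borel_measurable M"
proof -
  have L: "(\<lambda>\<omega>. length (Y \<omega>)) \<in> M \<rightarrow>\<^sub>M count_space UNIV" using measurable_compose[OF Y samplesM_length] by simp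
  have "(\<lambda>\<omega>. (\<lambda>L \<omega>. (idm i j + (\<Sum>n\<in>{1..L}. Cmat d k (take n (Y \<omega>)) i j)) / 2) (length (Y \<omega>)) \<omega>) \<in> borel_measurable M"
    by (rule measurable_compose_countable'[OF _ L]) (use measurable_Cmat[OF Y] in measurable)
  then show ?thesis unfolding Sigplus_def by simp
qed

lemma measurable_theta_est:
  fixes D :: "ctx measure"
  assumes sD: "sets D = sets (\<Pi>\<^sub>M i\<in>{..<d}. lborel)" and lo: "losses_ok d K loss"
    and X: "X \<in> M \<rightarrow>\<^sub>M D" and Y: "Y \<in> M \<rightarrow>\<^sub>M samplesM"
  shows "(\<lambda>\<omega>. theta_est d loss t (X \<omega>) A (Y \<omega>) k i) \<in> borel_measurable M"
proof -
  have l: "(\<lambda>\<omega>. loss t (X \<omega>) k) \<in> borel_measurable M" using measurable_compose[OF X loss_measurable[OF sD lo]] .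
  have x: "(\<lambda>\<omega>. X \<omega> j) \<in> borel_measurable M" for j using measurable_compose[OF X context_coord_measurable[OF sD]] .
  show ?thesis unfolding theta_est_def mvec_def using measurable_Sigplus[OF Y] l x by measurable
qed

section \<open>The expectation operators\<close>

lemma samp_const:
  assumes "prob_space D" shows "(\<And>ys. G ys = c) \<Longrightarrow> samp D Q n G = c"
proof (induction n arbitrary: G)
  case 0 then show ?case by simp
next
  case (Suc n)
  have "samp D Q (Suc n) G = (\<integral>\<^sup>+ x. (\<integral>\<^sup>+ A. c \<partial>measure_pmf (Q x)) \<partial>D)"
    unfolding samp.simps using Suc.IH[of "\<lambda>ys. G (_ # ys)"] Suc.prems by simp
  also have "\<dots> = c" using prob_space.emeasure_space_1[OF assms] by (simp add: nn_integral_const)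
  finally show ?case .
qed

lemma samp_mono: "(\<And>ys. G ys \<le> G' ys) \<Longrightarrow> samp D Q n G \<le> samp D Q n G'"
proof (induction n arbitrary: G G')
  case 0 then show ?case by simp
next
  case (Suc n) then show ?case by (simp add: nn_integral_mono)
qed

lemma samp_step_sum:
  assumes U: "finite U" and sup: "\<And>x. set_pmf (Q x) \<subseteq> U"
  shows "samp D Q (Suc n) G = (\<integral>\<^sup>+ x. (\<Sum>A\<in>U. samp D Q n (\<lambda>ys. G ((x, A) # ys)) * ennreal (pmf (Q x) A)) \<partial>D)"
  unfolding samp.simps
  by (intro nn_integral_cong nn_integral_measure_pmf_support[OF U]) (auto dest!: subsetD[OF sup])

text \<open>The induction runs over the number of samples still to be drawn; the samples already drawn
  are carried as a second parameter \<open>zs\<close>, so that the integrand stays fixed.\<close>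

lemma measurable_samp_append:
  fixes D :: "ctx measure" and P :: "'p measure"
  assumes pD: "prob_space D" and sD: "sets D = sets (\<Pi>\<^sub>M i\<in>{..<d}. lborel)" and U: "finite U"
    and sup: "\<And>q x. set_pmf (Q q x) \<subseteq> U"
    and Qm: "\<And>S. (\<lambda>(q, x). pmf (Q q x) S) \<in> borel_measurable (P \<Otimes>\<^sub>M D)"
    and Gm: "(\<lambda>(q, ys). G q ys) \<in> borel_measurable (P \<Otimes>\<^sub>M samplesM)"
  shows "(\<lambda>(q, zs). samp D (Q q) n (\<lambda>ys. G q (zs @ ys))) \<in> borel_measurable (P \<Otimes>\<^sub>M samplesM)"
proof (induction n)
  case 0
  show ?case using Gm by simp
next
  case (Suc n)
  interpret D: prob_space D by (rule pD)
  let ?M = "(P \<Otimes>\<^sub>M samplesM) \<Otimes>\<^sub>M D"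
  have step: "(\<lambda>((q, zs), x). samp D (Q q) n (\<lambda>ys. G q ((zs @ [(x, A)]) @ ys)) * ennreal (pmf (Q q x) A))
      \<in> borel_measurable ?M" for A
  proof -
    have "(\<lambda>\<omega>. snd (fst \<omega>) @ [(snd \<omega>, A)]) \<in> ?M \<rightarrow>\<^sub>M samplesM"
      by (rule measurable_samplesM_snoc[OF measurable_compose[OF measurable_fst measurable_snd]])
         (rule measurable_compose[OF measurable_snd context_coord_measurable[OF sD]])
    then have "(\<lambda>\<omega>. (fst (fst \<omega>), snd (fst \<omega>) @ [(snd \<omega>, A)])) \<in> ?M \<rightarrow>\<^sub>M P \<Otimes>\<^sub>M samplesM"
      by measurable
    from measurable_compose[OF this Suc.IH]
    have "(\<lambda>\<omega>. samp D (Q (fst (fst \<omega>))) n (\<lambda>ys. G (fst (fst \<omega>)) ((snd (fst \<omega>) @ [(snd \<omega>, A)]) @ ys)))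
        \<in> borel_measurable ?M" by simp
    moreover have "(\<lambda>\<omega>. (fst (fst \<omega>), snd \<omega>)) \<in> ?M \<rightarrow>\<^sub>M P \<Otimes>\<^sub>M D" by measurable
    from measurable_compose[OF this Qm[of A]]
    have "(\<lambda>\<omega>. pmf (Q (fst (fst \<omega>)) (snd \<omega>)) A) \<in> borel_measurable ?M" by simp
    ultimately show ?thesis by (simp add: case_prod_beta') measurable
  qed
  have "(\<lambda>((q, zs), x). \<Sum>A\<in>U. samp D (Q q) n (\<lambda>ys. G q ((zs @ [(x, A)]) @ ys)) * ennreal (pmf (Q q x) A))
      \<in> borel_measurable ?M"
    using step by (simp add: case_prod_beta') measurable
  from D.borel_measurable_nn_integral[OF this]
  show ?case unfolding samp_step_sum[OF U sup] by (simp add: case_prod_beta')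
qed

lemma measurable_samp:
  fixes D :: "ctx measure" and P :: "'p measure"
  assumes pD: "prob_space D" and sD: "sets D = sets (\<Pi>\<^sub>M i\<in>{..<d}. lborel)" and U: "finite U"
    and sup: "\<And>q x. set_pmf (Q q x) \<subseteq> U"
    and Qm: "\<And>S. (\<lambda>(q, x). pmf (Q q x) S) \<in> borel_measurable (P \<Otimes>\<^sub>M D)"
    and Gm: "(\<lambda>(q, ys). G q ys) \<in> borel_measurable (P \<Otimes>\<^sub>M samplesM)"
  shows "(\<lambda>q. samp D (Q q) n (G q)) \<in> borel_measurable P"
  using measurable_compose[OF _ measurable_samp_append[OF pD sD U sup Qm Gm], of "\<lambda>q. (q, [])"]
  by simp

lemma run_prefix_invariant:
  assumes "prob_space D" shows "(\<And>ys. F (h @ ys) = F h) \<Longrightarrow> run D d K m T loss p n h F = F h"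
proof (induction n arbitrary: h)
  case 0 then show ?case by simp
next
  case (Suc n)
  have IH: "run D d K m T loss p n (h @ [e]) F = F h" for e
    using Suc.IH[of "h @ [e]"] Suc.prems[of "[e]"] Suc.prems by simp
  show ?case unfolding run.simps Let_def IH
    using samp_const[OF assms] prob_space.emeasure_space_1[OF assms] by (simp add: nn_integral_const)
qed

lemma run_const: "prob_space D \<Longrightarrow> run D d K m T loss p n h (\<lambda>_. c) = c"
  using run_prefix_invariant[of D "\<lambda>_. c"] by simp

lemma run_Suc_next_context:
  assumes "prob_space D" and F: "\<And>e ys. F (h @ e # ys) = f (fst e)"
  shows "run D d K m T loss p (Suc n) h F = (\<integral>\<^sup>+ x. f x \<partial>D)"
proof -
  have "run D d K m T loss p n (h @ [e]) F = f (fst e)" for e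
    using run_prefix_invariant[OF assms(1), of F "h @ [e]"] F[of e] F[of e "[]"] by simp
  then show ?thesis
    using samp_const[OF assms(1)] prob_space.emeasure_space_1[OF assms(1)] by (simp add: nn_integral_const)
qed

lemma run_add: "run D d K m T loss p (a + b) h F = run D d K m T loss p a h (\<lambda>h'. run D d K m T loss p b h' F)"
  by (induction a arbitrary: h) (simp_all add: Let_def)

lemma run_cong:
  "(\<And>ys. length ys = n \<Longrightarrow> F (h @ ys) = F' (h @ ys)) \<Longrightarrow> run D d K m T loss p n h F = run D d K m T loss p n h F'"
proof (induction n arbitrary: h)
  case 0 then show ?case using 0[of "[]"] by simp
next
  case (Suc n)
  have "run D d K m T loss p n (h @ [e]) F = run D d K m T loss p n (h @ [e]) F'" for e
    by (rule Suc.IH) (use Suc.prems[of "e # _"] in simp)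
  then show ?case by (simp add: Let_def)
qed

lemma run_mono: "(\<And>h. F h \<le> F' h) \<Longrightarrow> run D d K m T loss p n h F \<le> run D d K m T loss p n h F'"
proof (induction n arbitrary: h)
  case 0 then show ?case by simp
next
  case (Suc n) then show ?case by (simp add: Let_def nn_integral_mono samp_mono)
qed

lemma measurable_samp_Cons:
  fixes D :: "ctx measure"
  assumes pD: "prob_space D" and sD: "sets D = sets (\<Pi>\<^sub>M i\<in>{..<d}. lborel)" and U: "finite U"
    and sup: "\<And>x. set_pmf (Q x) \<subseteq> U" and Qm: "\<And>S. (\<lambda>x. pmf (Q x) S) \<in> borel_measurable D"
    and G: "G \<in> borel_measurable samplesM"
  shows "(\<lambda>x. samp D Q n (\<lambda>ys. G ((x, A) # ys))) \<in> borel_measurable D"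
proof -
  have "(\<lambda>x. samp D ((\<lambda>_. Q) x) n ((\<lambda>x ys. G ((x, A) # ys)) x)) \<in> borel_measurable D"
  proof (rule measurable_samp[OF pD sD U])
    show "set_pmf (Q x) \<subseteq> U" for x using sup .
    show "(\<lambda>(q, x). pmf (Q x) S) \<in> borel_measurable (D \<Otimes>\<^sub>M D)" for S
      using measurable_compose[OF measurable_snd Qm[of S]] by (simp add: case_prod_beta')
    have "(\<lambda>\<omega>. (fst \<omega>, A) # snd \<omega>) \<in> D \<Otimes>\<^sub>M samplesM \<rightarrow>\<^sub>M samplesM"
      by (rule measurable_samplesM_Cons)
         (use measurable_compose[OF measurable_fst context_coord_measurable[OF sD]] in auto)
    from measurable_compose[OF this G]
    show "(\<lambda>(q, ys). G ((q, A) # ys)) \<in> borel_measurable (D \<Otimes>\<^sub>M samplesM)" by (simp add: case_prod_beta')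
  qed
  then show ?thesis by simp
qed

lemma samp_linear:
  fixes D :: "ctx measure"
  assumes pD: "prob_space D" and sD: "sets D = sets (\<Pi>\<^sub>M i\<in>{..<d}. lborel)" and U: "finite U"
    and sup: "\<And>x. set_pmf (Q x) \<subseteq> U" and Qm: "\<And>S. (\<lambda>x. pmf (Q x) S) \<in> borel_measurable D"
  shows "G1 \<in> borel_measurable samplesM \<Longrightarrow> G2 \<in> borel_measurable samplesM \<Longrightarrow>
    samp D Q n (\<lambda>ys. c * G1 ys + G2 ys) = c * samp D Q n G1 + samp D Q n G2"
proof (induction n arbitrary: G1 G2)
  case 0 then show ?case by simp
next
  case (Suc n)
  have consm: "(\<lambda>ys. G ((x, A) # ys)) \<in> borel_measurable samplesM" if "G \<in> borel_measurable samplesM" for G x A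
  proof -
    have "(\<lambda>ys. (x, A) # ys) \<in> samplesM \<rightarrow>\<^sub>M samplesM" by (rule measurable_samplesM_Cons[where X="\<lambda>_. x"]) auto
    from measurable_compose[OF this that] show ?thesis .
  qed
  have fm: "(\<lambda>x. \<Sum>A\<in>U. samp D Q n (\<lambda>ys. G ((x, A) # ys)) * ennreal (pmf (Q x) A)) \<in> borel_measurable D"
    if "G \<in> borel_measurable samplesM" for G
    using measurable_samp_Cons[OF pD sD U sup Qm that] Qm by measurable
  have "samp D Q (Suc n) (\<lambda>ys. c * G1 ys + G2 ys) =
      (\<integral>\<^sup>+ x. (\<Sum>A\<in>U. (c * samp D Q n (\<lambda>ys. G1 ((x, A) # ys)) + samp D Q n (\<lambda>ys. G2 ((x, A) # ys))) * ennreal (pmf (Q x) A)) \<partial>D)"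
    unfolding samp_step_sum[OF U sup] using Suc.IH[OF consm[OF Suc.prems(1)] consm[OF Suc.prems(2)]] by simp
  also have "\<dots> = (\<integral>\<^sup>+ x. c * (\<Sum>A\<in>U. samp D Q n (\<lambda>ys. G1 ((x, A) # ys)) * ennreal (pmf (Q x) A))
       + (\<Sum>A\<in>U. samp D Q n (\<lambda>ys. G2 ((x, A) # ys)) * ennreal (pmf (Q x) A)) \<partial>D)"
    by (simp add: distrib_right sum.distrib sum_distrib_left mult.assoc)
  also have "\<dots> = c * (\<integral>\<^sup>+ x. (\<Sum>A\<in>U. samp D Q n (\<lambda>ys. G1 ((x, A) # ys)) * ennreal (pmf (Q x) A)) \<partial>D)
       + (\<integral>\<^sup>+ x. (\<Sum>A\<in>U. samp D Q n (\<lambda>ys. G2 ((x, A) # ys)) * ennreal (pmf (Q x) A)) \<partial>D)"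
    using fm[OF Suc.prems(1)] fm[OF Suc.prems(2)] by (simp add: nn_integral_add nn_integral_cmult)
  also have "\<dots> = c * samp D Q (Suc n) G1 + samp D Q (Suc n) G2"
    unfolding samp_step_sum[OF U sup] ..
  finally show ?case .
qed

section \<open>Entropies along a history\<close>

definition beta_first :: "ctx measure \<Rightarrow> nat \<Rightarrow> nat \<Rightarrow> nat \<Rightarrow> nat \<Rightarrow> real" where
  "beta_first D d K m T = max (max 2 (cc2 D d K * ln (real T))) (cc1 D d K m T)"

text \<open>\<open>Abar\<^sub>1\<close> faces zero loss, so it maximises the entropy over the polytope.\<close>

definition max_ent :: "ctx measure \<Rightarrow> nat \<Rightarrow> nat \<Rightarrow> nat \<Rightarrow> nat \<Rightarrow> real" where
  "max_ent D d K m T = ent K (reg_min K m (beta_first D d K m T) (\<lambda>_. 0))"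

lemma Abar_t_first: "Abar_t D d K m T h 1 x = reg_min K m (beta_first D d K m T) (\<lambda>_. 0)"
proof -
  have "cum_loss d [] x = (\<lambda>_. 0)" by (simp add: cum_loss_def fun_eq_iff)
  then show ?thesis unfolding Abar_t_eq_reg_min by (simp add: beta_def betap_def beta_first_def)
qed

lemma ent_le_max_ent: "b \<in> convA K m \<Longrightarrow> ent K b \<le> max_ent D d K m T"
proof -
  assume b: "b \<in> convA K m"
  have pos: "0 < beta_first D d K m T" unfolding beta_first_def by simp
  have "reg_obj K (beta_first D d K m T) (\<lambda>_. 0) (reg_min K m (beta_first D d K m T) (\<lambda>_. 0)) \<le> reg_obj K (beta_first D d K m T) (\<lambda>_. 0) b"
    using reg_min_is_min b by blast
  then show ?thesis unfolding reg_obj_def max_ent_def using pos by simp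
qed

lemma max_ent_pos: assumes "0 < K" "1 \<le> m" shows "0 < max_ent D d K m T"
proof -
  have e0: "{} \<in> acts K m" and e1: "{0} \<in> acts K m" using assms by (auto simp: acts_def)
  define a where "a = (\<lambda>k. (1 - 1/2) * avec {} k + 1/2 * avec {0} k)"
  have a: "a \<in> convA K m" unfolding a_def by (rule convA_convex_comb[OF convA_avec[OF e0] convA_avec[OF e1]]) auto
  have "ent K a = - xlnx (1/2)"
  proof -
    have "(\<Sum>k<K. xlnx (a k)) = (\<Sum>k\<in>{0}. xlnx (a k))"
      by (rule sum.mono_neutral_right) (use assms in \<open>auto simp: a_def avec_def xlnx_def\<close>)
    then show ?thesis unfolding ent_eq_xlnx by (simp add: a_def avec_def)
  qed
  also have "- xlnx (1/2) > 0" unfolding xlnx_def by (simp add: ln_div)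
  finally show ?thesis using ent_le_max_ent[OF a, of D d T] by simp
qed

lemma Abar_bp_eq_Abar_t: "Abar K m d (1 / max (max 2 (cc2 D d K * ln (real T))) (fst (bp D d K m T h t))) (map snd (take t h)) (fst (h ! t))
   = Abar_t D d K m T h (Suc t) (fst (h ! t))"
  unfolding Abar_t_def eta_def beta_def betap_def by simp

text \<open>\<open>played_ent h s\<close> is \<open>H(Abar\<^sub>s(X\<^sub>s))\<close>; \<open>ghost_ent h s\<close> is the expectation of
  \<open>H(Abar\<^sub>s(X\<^sub>0))\<close> over the ghost context \<open>X\<^sub>0\<close>.\<close>

definition played_ent :: "ctx measure \<Rightarrow> nat \<Rightarrow> nat \<Rightarrow> nat \<Rightarrow> nat \<Rightarrow> hist \<Rightarrow> nat \<Rightarrow> real" where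
  "played_ent D d K m T h s = ent K (Abar_t D d K m T h s (fst (h ! (s - 1))))"

lemma bp_snd: "snd (bp D d K m T h t) = (\<Sum>s=1..t. played_ent D d K m T h s)"
  by (induction t) (simp_all add: Let_def Abar_bp_eq_Abar_t played_ent_def)

lemma bp_fst: "fst (bp D d K m T h (Suc t)) - fst (bp D d K m T h t) =
   cc1 D d K m T / sqrt (1 + snd (bp D d K m T h (Suc t)) / (real m * ln (real K / real m)))"
  by (simp add: Let_def)

lemma bp_prefix: "t \<le> length h \<Longrightarrow> bp D d K m T (h @ ys) t = bp D d K m T h t"
  by (induction t) (simp_all add: Let_def nth_append)

lemma betap_prefix: "t - 1 \<le> length h \<Longrightarrow> betap D d K m T (h @ ys) t = betap D d K m T h t"
  unfolding betap_def by (simp add: bp_prefix)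

lemma Abar_t_prefix: "t - 1 \<le> length h \<Longrightarrow> Abar_t D d K m T (h @ ys) t x = Abar_t D d K m T h t x"
  unfolding Abar_t_def eta_def beta_def by (simp add: betap_prefix)

definition ghost_ent :: "ctx measure \<Rightarrow> nat \<Rightarrow> nat \<Rightarrow> nat \<Rightarrow> nat \<Rightarrow> hist \<Rightarrow> nat \<Rightarrow> ennreal" where
  "ghost_ent D d K m T h s = (\<integral>\<^sup>+ x. ennreal (ent K (Abar_t D d K m T h s x)) \<partial>D)"

lemma ghost_ent_prefix: "t - 1 \<le> length h \<Longrightarrow> ghost_ent D d K m T (h @ ys) t = ghost_ent D d K m T h t"
  unfolding ghost_ent_def by (simp add: Abar_t_prefix)

lemma measurable_played_ent: "(\<lambda>h. played_ent D d K m T h s) \<in> borel_measurable histM"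
  unfolding played_ent_def by (rule measurable_ent_Abar_t[where H="\<lambda>h. h"]) (simp_all add: histM_ctx)

lemma measurable_betap: "(\<lambda>h. betap D d K m T h t) \<in> borel_measurable histM"
  unfolding betap_def using measurable_bp[where H="\<lambda>h. h"] by simp

definition betap_incr :: "ctx measure \<Rightarrow> nat \<Rightarrow> nat \<Rightarrow> nat \<Rightarrow> nat \<Rightarrow> hist \<Rightarrow> nat \<Rightarrow> real" where
  "betap_incr D d K m T h t = betap D d K m T h (t + 1) - betap D d K m T h t"

lemma betap_incr_eq: "1 \<le> t \<Longrightarrow> betap_incr D d K m T h t =
   cc1 D d K m T / sqrt (1 + (\<Sum>s=1..t. played_ent D d K m T h s) / (real m * ln (real K / real m)))"
  using bp_fst[of D d K m T h "t - 1"] bp_snd[of D d K m T h t] unfolding betap_incr_def betap_def by simp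

lemma betap_incr_prefix: "t \<le> length h \<Longrightarrow> betap_incr D d K m T (h @ ys) t = betap_incr D d K m T h t"
  unfolding betap_incr_def by (simp add: betap_prefix)

lemma measurable_betap_incr: "(\<lambda>h. betap_incr D d K m T h t) \<in> borel_measurable histM"
  unfolding betap_incr_def using measurable_betap by measurable

lemma played_ent_bounds: "0 \<le> played_ent D d K m T h s" "played_ent D d K m T h s \<le> max_ent D d K m T"
  unfolding played_ent_def using ent_nonneg[OF Abar_t_convA] ent_le_max_ent[OF Abar_t_convA] by auto

lemma played_ent_first: "played_ent D d K m T h 1 = max_ent D d K m T"
  unfolding played_ent_def Abar_t_first max_ent_def ..

lemma ghost_ent_le: "prob_space D \<Longrightarrow> ghost_ent D d K m T h s \<le> ennreal (max_ent D d K m T)"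
proof -
  assume D: "prob_space D"
  have "ghost_ent D d K m T h s \<le> (\<integral>\<^sup>+ x. ennreal (max_ent D d K m T) \<partial>D)"
    unfolding ghost_ent_def by (intro nn_integral_mono ennreal_leI ent_le_max_ent Abar_t_convA)
  then show ?thesis using prob_space.emeasure_space_1[OF D] by (simp add: nn_integral_const)
qed

lemma ghost_ent_first: "prob_space D \<Longrightarrow> ghost_ent D d K m T h 1 = ennreal (max_ent D d K m T)"
  unfolding ghost_ent_def Abar_t_first max_ent_def[symmetric]
  by (simp add: nn_integral_const prob_space.emeasure_space_1)

lemma betap_incr_nonneg:
  "1 \<le> t \<Longrightarrow> 0 < real m * ln (real K / real m) \<Longrightarrow> 0 \<le> cc1 D d K m T \<Longrightarrow> 0 \<le> betap_incr D d K m T h t"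
  unfolding betap_incr_eq
  by (intro divide_nonneg_nonneg real_sqrt_ge_zero add_nonneg_nonneg sum_nonneg played_ent_bounds) auto

lemma weighted_played_ent_le:
  fixes K m :: nat
  defines "c \<equiv> real m * ln (real K / real m)"
  assumes c: "0 < c" and T: "1 \<le> T" and c1: "0 \<le> cc1 D d K m T"
  shows "(\<Sum>t\<in>{1..T-1}. betap_incr D d K m T h t * played_ent D d K m T h (t+1))
           + betap_incr D d K m T h T * max_ent D d K m T
         \<le> 6 * cc1 D d K m T * sqrt c * sqrt (\<Sum>s=1..T. played_ent D d K m T h s)"
proof -
  define x where "x = (\<lambda>s. if s \<le> T then played_ent D d K m T h s else max_ent D d K m T)"
  have sums: "(\<Sum>s=1..t. x s) = (\<Sum>s=1..t. played_ent D d K m T h s)" if "t \<le> T" for t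
    using that by (intro sum.cong) (auto simp: x_def)
  have "{1..T} = insert T {1..T-1}" "T \<notin> {1..T-1}" using T by auto
  moreover have "(\<Sum>t\<in>{1..T-1}. betap_incr D d K m T h t * x (t+1))
      = (\<Sum>t\<in>{1..T-1}. betap_incr D d K m T h t * played_ent D d K m T h (t+1))"
    by (intro sum.cong) (auto simp: x_def)
  ultimately have "(\<Sum>t\<in>{1..T-1}. betap_incr D d K m T h t * played_ent D d K m T h (t+1))
      + betap_incr D d K m T h T * max_ent D d K m T = (\<Sum>t=1..T. betap_incr D d K m T h t * x (t+1))"
    by (simp add: x_def)
  also have "\<dots> = cc1 D d K m T * (\<Sum>t=1..T. x (t+1) / sqrt (1 + (\<Sum>s=1..t. x s) / c))"
    unfolding sum_distrib_left
  proof (rule sum.cong[OF refl])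
    fix t assume "t \<in> {1..T}"
    then show "betap_incr D d K m T h t * x (t+1)
        = cc1 D d K m T * (x (t+1) / sqrt (1 + (\<Sum>s=1..t. x s) / c))"
      using sums[of t] by (simp add: betap_incr_eq c_def)
  qed
  also have "\<dots> \<le> cc1 D d K m T * (6 * sqrt c * sqrt (\<Sum>s=1..T. x s))"
  proof (rule mult_left_mono[OF adaptive_weight_sum_bound[OF c _ _ T]])
    show "x 1 = max_ent D d K m T" using T played_ent_first by (simp add: x_def)
    show "0 \<le> x s \<and> x s \<le> max_ent D d K m T" if "1 \<le> s" for s
      using played_ent_bounds[of D d K m T h] by (auto simp: x_def intro: order_trans)
  qed (rule c1)
  finally show ?thesis using sums[of T] by (simp add: mult_ac)
qed

section \<open>Expectations over a run of the algorithm\<close>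

locale bandit_instance =
  fixes D :: "ctx measure" and d K m T :: nat
    and loss :: "nat \<Rightarrow> ctx \<Rightarrow> nat \<Rightarrow> real" and p :: "nat \<Rightarrow> (nat \<Rightarrow> real) \<Rightarrow> nat set pmf"
  assumes cd: "context_dist d D" and lo: "losses_ok d K loss" and dec: "decomp_ok K m p"
    and m_pos: "1 \<le> m" and m_less_K: "m < K" and cc1_nonneg: "0 \<le> cc1 D d K m T"
begin

lemma K_pos: "0 < K"
  using m_pos m_less_K by simp

lemma prob_space_D: "prob_space D" and sets_D: "sets D = sets (\<Pi>\<^sub>M i\<in>{..<d}. lborel)"
  using cd unfolding context_dist_def by auto

sublocale D: prob_space D
  by (rule prob_space_D)

lemma ctx_coord_measurable: "(\<lambda>x. x i) \<in> borel_measurable D"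
  by (rule context_coord_measurable[OF sets_D])

lemma ln_ratio_pos: "0 < real m * ln (real K / real m)"
  using m_pos m_less_K by (auto intro!: mult_pos_pos ln_gt_zero simp: field_simps)

definition next_round :: "nat \<Rightarrow> nat \<Rightarrow> (hist \<Rightarrow> ennreal) \<Rightarrow> hist \<Rightarrow> ctx \<Rightarrow> ennreal" where
  "next_round t n F h x = (\<Sum>A\<in>acts K m. samp D (pol D d K m T p h t) (Mt D d K m T h t)
      (\<lambda>ys. run D d K m T loss p n (h @ [(x, theta_est d loss t x A ys)]) F)
      * ennreal (pmf (pol D d K m T p h t x) A))"

lemma run_Suc_eq_next_round:
  "run D d K m T loss p (Suc n) h F = (\<integral>\<^sup>+ x. next_round (Suc (length h)) n F h x \<partial>D)"
  unfolding next_round_def run.simps Let_def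
  by (intro nn_integral_cong nn_integral_measure_pmf_support[OF finite_acts])
     (auto dest!: subsetD[OF set_pmf_pol[OF K_pos m_pos dec]])

lemma measurable_next_round_samp:
  assumes RF: "(\<lambda>h. run D d K m T loss p n h F) \<in> borel_measurable histM"
  shows "(\<lambda>\<omega>. samp D (pol D d K m T p (fst \<omega>) t) N
           (\<lambda>ys. run D d K m T loss p n (fst \<omega> @ [(snd \<omega>, theta_est d loss t (snd \<omega>) A ys)]) F))
         \<in> borel_measurable (histM \<Otimes>\<^sub>M D)"
proof (rule measurable_samp[OF prob_space_D sets_D finite_acts])
  show "set_pmf (pol D d K m T p (fst q) t x) \<subseteq> acts K m" for q x
    by (rule set_pmf_pol[OF K_pos m_pos dec])
  show "(\<lambda>(q, x). pmf (pol D d K m T p (fst q) t x) S) \<in> borel_measurable ((histM \<Otimes>\<^sub>M D) \<Otimes>\<^sub>M D)" for S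
  proof -
    have "(\<lambda>\<omega>. fst (fst \<omega>)) \<in> (histM \<Otimes>\<^sub>M D) \<Otimes>\<^sub>M D \<rightarrow>\<^sub>M histM" by measurable
    from measurable_pmf_pol[OF this measurable_compose[OF measurable_snd ctx_coord_measurable] dec]
    show ?thesis by (simp add: case_prod_beta')
  qed
  let ?M = "(histM \<Otimes>\<^sub>M D) \<Otimes>\<^sub>M samplesM"
  have X: "(\<lambda>\<omega>. snd (fst \<omega>)) \<in> ?M \<rightarrow>\<^sub>M D" by measurable
  have "(\<lambda>\<omega>. fst (fst \<omega>) @ [(snd (fst \<omega>), theta_est d loss t (snd (fst \<omega>)) A (snd \<omega>))]) \<in> ?M \<rightarrow>\<^sub>M histM"
    by (rule measurable_histM_snoc)
       (simp_all add: measurable_compose[OF X ctx_coord_measurable] measurable_theta_est[OF sets_D lo X])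
  from measurable_compose[OF this RF]
  show "(\<lambda>(q, ys). run D d K m T loss p n (fst q @ [(snd q, theta_est d loss t (snd q) A ys)]) F)
      \<in> borel_measurable ?M"
    by (simp add: case_prod_beta')
qed

lemma measurable_next_round:
  assumes RF: "(\<lambda>h. run D d K m T loss p n h F) \<in> borel_measurable histM"
  shows "(\<lambda>(h, x). next_round t n F h x) \<in> borel_measurable (histM \<Otimes>\<^sub>M D)"
proof -
  have H: "fst \<in> histM \<Otimes>\<^sub>M D \<rightarrow>\<^sub>M histM" by measurable
  have X: "(\<lambda>\<omega>. snd \<omega> i) \<in> borel_measurable (histM \<Otimes>\<^sub>M D)" for i
    by (rule measurable_compose[OF measurable_snd ctx_coord_measurable])
  have "(\<lambda>\<omega>. (\<lambda>N \<omega>. samp D (pol D d K m T p (fst \<omega>) t) N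
           (\<lambda>ys. run D d K m T loss p n (fst \<omega> @ [(snd \<omega>, theta_est d loss t (snd \<omega>) A ys)]) F))
         (Mt D d K m T (fst \<omega>) t) \<omega>) \<in> borel_measurable (histM \<Otimes>\<^sub>M D)" for A
    by (rule measurable_compose_countable'[OF measurable_next_round_samp[OF RF] measurable_Mt[OF H]]) simp
  then show ?thesis
    unfolding next_round_def using measurable_pmf_pol[OF H X dec] by (simp add: case_prod_beta') measurable
qed

lemma measurable_run: "F \<in> borel_measurable histM \<Longrightarrow> (\<lambda>h. run D d K m T loss p n h F) \<in> borel_measurable histM"
proof (induction n)
  case (Suc n)
  have "(\<lambda>h. \<integral>\<^sup>+ x. next_round (Suc l) n F h x \<partial>D) \<in> borel_measurable histM" for l
    using D.borel_measurable_nn_integral[OF measurable_next_round[OF Suc.IH[OF Suc.prems]]] by simp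
  then have "(\<lambda>h. (\<lambda>l h. \<integral>\<^sup>+ x. next_round (Suc l) n F h x \<partial>D) (length h) h) \<in> borel_measurable histM"
    by (rule measurable_compose_countable'[OF _ histM_length]) simp
  then show ?case by (simp del: run.simps add: run_Suc_eq_next_round)
qed simp

lemma run_linear:
  assumes F1: "F1 \<in> borel_measurable histM" and F2: "F2 \<in> borel_measurable histM"
  shows "run D d K m T loss p n h (\<lambda>h. c * F1 h + F2 h)
       = c * run D d K m T loss p n h F1 + run D d K m T loss p n h F2"
proof (induction n arbitrary: h)
  case (Suc n)
  define t where "t = Suc (length h)"
  have integrand: "(\<lambda>ys. run D d K m T loss p n (h @ [(x, theta_est d loss t x A ys)]) F) \<in> borel_measurable samplesM"
    if "F \<in> borel_measurable histM" "x \<in> space D" for F x A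
  proof -
    have X: "(\<lambda>_::sample list. x) \<in> samplesM \<rightarrow>\<^sub>M D" using that(2) by simp
    have "(\<lambda>ys. h @ [(x, theta_est d loss t x A ys)]) \<in> samplesM \<rightarrow>\<^sub>M histM"
      by (rule measurable_histM_snoc[where H="\<lambda>_. h"])
         (auto intro: measurable_theta_est[OF sets_D lo X, where Y="\<lambda>ys. ys", simplified])
    from measurable_compose[OF this measurable_run[OF that(1)]] show ?thesis .
  qed
  have pol: "(\<lambda>x. pmf (pol D d K m T p h t x) S) \<in> borel_measurable D" for S
    by (rule measurable_pmf_pol[OF _ ctx_coord_measurable dec, where H="\<lambda>_. h"]) simp
  have round: "next_round t n (\<lambda>h. c * F1 h + F2 h) h x = c * next_round t n F1 h x + next_round t n F2 h x"
    if "x \<in> space D" for x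
    unfolding next_round_def Suc.IH
    using samp_linear[OF prob_space_D sets_D finite_acts set_pmf_pol[OF K_pos m_pos dec] pol
        integrand[OF F1 that] integrand[OF F2 that]]
    by (simp add: distrib_right sum.distrib sum_distrib_left mult.assoc)
  have measurable_round: "next_round t n F h \<in> borel_measurable D" if "F \<in> borel_measurable histM" for F
    using measurable_compose[OF _ measurable_next_round[OF measurable_run[OF that]], of "\<lambda>x. (h, x)"]
    by simp
  have "(\<integral>\<^sup>+ x. next_round t n (\<lambda>h. c * F1 h + F2 h) h x \<partial>D)
      = (\<integral>\<^sup>+ x. c * next_round t n F1 h x \<partial>D) + (\<integral>\<^sup>+ x. next_round t n F2 h x \<partial>D)"
    using nn_integral_add[OF borel_measurable_times_ennreal[OF _ measurable_round[OF F1]] measurable_round[OF F2]]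
    by (simp add: nn_integral_cong[OF round])
  then show ?case
    unfolding run_Suc_eq_next_round t_def[symmetric] by (simp add: nn_integral_cmult measurable_round F1)
qed simp

lemma run_cmult:
  "F \<in> borel_measurable histM \<Longrightarrow> run D d K m T loss p n h (\<lambda>h. c * F h) = c * run D d K m T loss p n h F"
  using run_linear[of F "\<lambda>_. 0" n h c] by (simp add: run_const[OF prob_space_D] del: run.simps)

lemma run_sum:
  assumes "finite I" and "\<And>i. i \<in> I \<Longrightarrow> F i \<in> borel_measurable histM"
  shows "run D d K m T loss p n h (\<lambda>h. \<Sum>i\<in>I. F i h) = (\<Sum>i\<in>I. run D d K m T loss p n h (F i))"
  using assms
proof (induction I rule: finite_induct)
  case empty
  then show ?case using run_const[OF prob_space_D] by simp
next
  case (insert i I)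
  then show ?case
    using run_linear[of "F i" "\<lambda>h. \<Sum>i\<in>I. F i h" n h 1] by simp
qed

lemma measurable_ghost_ent: "(\<lambda>h. ghost_ent D d K m T h s) \<in> borel_measurable histM"
proof -
  have "(\<lambda>\<omega>. ent K (Abar_t D d K m T (fst \<omega>) s (snd \<omega>))) \<in> borel_measurable (histM \<Otimes>\<^sub>M D)"
    by (rule measurable_ent_Abar_t[OF measurable_fst measurable_compose[OF measurable_snd ctx_coord_measurable]])
  then have "(\<lambda>(h, x). ennreal (ent K (Abar_t D d K m T h s x))) \<in> borel_measurable (histM \<Otimes>\<^sub>M D)"
    by (simp add: case_prod_beta')
  from D.borel_measurable_nn_integral[OF this] show ?thesis unfolding ghost_ent_def by simp
qed

lemma measurable_played_ent_ennreal: "(\<lambda>h. ennreal (played_ent D d K m T h s)) \<in> borel_measurable histM"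
  using measurable_played_ent by measurable

lemma measurable_ent_Abar_t_ctx: "(\<lambda>x. ennreal (ent K (Abar_t D d K m T h s x))) \<in> borel_measurable D"
  using measurable_ent_Abar_t[of "\<lambda>_. h", OF _ ctx_coord_measurable] by simp

lemma run_ghost_ent_tower:
  assumes t: "1 \<le> t" "t \<le> T" and g: "\<And>h ys. length h = t - 1 \<Longrightarrow> g (h @ ys) = g h"
  shows "run D d K m T loss p T [] (\<lambda>h. g h * ennreal (played_ent D d K m T h t))
       = run D d K m T loss p T [] (\<lambda>h. g h * ghost_ent D d K m T h t)"
proof -
  have both: "run D d K m T loss p (Suc (T - t)) h (\<lambda>h. g h * ennreal (played_ent D d K m T h t))
        = g h * ghost_ent D d K m T h t"
      "run D d K m T loss p (Suc (T - t)) h (\<lambda>h. g h * ghost_ent D d K m T h t)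
        = g h * ghost_ent D d K m T h t"
    if h: "length h = t - 1" for h
  proof -
    have pre: "t - 1 \<le> length h" using h by simp
    have "run D d K m T loss p (Suc (T - t)) h (\<lambda>h. g h * ennreal (played_ent D d K m T h t))
        = (\<integral>\<^sup>+ x. g h * ennreal (ent K (Abar_t D d K m T h t x)) \<partial>D)"
      by (rule run_Suc_next_context[OF prob_space_D])
         (use g[OF h] Abar_t_prefix[OF pre] h t in \<open>simp add: played_ent_def nth_append\<close>)
    also have "\<dots> = g h * ghost_ent D d K m T h t"
      unfolding ghost_ent_def by (rule nn_integral_cmult[OF measurable_ent_Abar_t_ctx])
    finally show "run D d K m T loss p (Suc (T - t)) h (\<lambda>h. g h * ennreal (played_ent D d K m T h t))
        = g h * ghost_ent D d K m T h t" .
    have "run D d K m T loss p (Suc (T - t)) h (\<lambda>h. g h * ghost_ent D d K m T h t)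
        = (\<integral>\<^sup>+ x. g h * ghost_ent D d K m T h t \<partial>D)"
      by (rule run_Suc_next_context[OF prob_space_D]) (use g[OF h] ghost_ent_prefix[OF pre] in simp)
    then show "run D d K m T loss p (Suc (T - t)) h (\<lambda>h. g h * ghost_ent D d K m T h t)
        = g h * ghost_ent D d K m T h t"
      by (simp add: nn_integral_const D.emeasure_space_1)
  qed
  have split: "run D d K m T loss p T [] F
      = run D d K m T loss p (t - 1) [] (\<lambda>h. run D d K m T loss p (Suc (T - t)) h F)" for F
    using run_add[of D d K m T loss p "t - 1" "Suc (T - t)" "[]" F] t by simp
  show ?thesis
    unfolding split by (rule run_cong) (simp del: run.simps add: both)
qed

abbreviation expect :: "(hist \<Rightarrow> ennreal) \<Rightarrow> ennreal" where
  "expect F \<equiv> run D d K m T loss p T [] F"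

lemma ennreal_betap_incr_ghost_ent_sum:
  "(\<integral>\<^sup>+ x. ennreal (\<Sum>t=1..T. betap_incr D d K m T h t * ent K (Abar_t D d K m T h (t + 1) x)) \<partial>D)
   = (\<Sum>t=1..T. ennreal (betap_incr D d K m T h t) * ghost_ent D d K m T h (t + 1))"
proof -
  have "ennreal (\<Sum>t=1..T. betap_incr D d K m T h t * ent K (Abar_t D d K m T h (t + 1) x))
      = (\<Sum>t=1..T. ennreal (betap_incr D d K m T h t) * ennreal (ent K (Abar_t D d K m T h (t + 1) x)))" for x
    using betap_incr_nonneg[OF _ ln_ratio_pos cc1_nonneg] ent_nonneg[OF Abar_t_convA]
    by (subst sum_ennreal[symmetric]) (auto intro!: sum.cong ennreal_mult mult_nonneg_nonneg)
  moreover have "(\<integral>\<^sup>+ x. (\<Sum>t=1..T. ennreal (betap_incr D d K m T h t) * ennreal (ent K (Abar_t D d K m T h (t + 1) x))) \<partial>D)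
      = (\<Sum>t=1..T. \<integral>\<^sup>+ x. ennreal (betap_incr D d K m T h t) * ennreal (ent K (Abar_t D d K m T h (t + 1) x)) \<partial>D)"
    by (rule nn_integral_sum) (intro borel_measurable_times_ennreal borel_measurable_const measurable_ent_Abar_t_ctx)
  ultimately show ?thesis
    unfolding ghost_ent_def by (simp add: nn_integral_cmult measurable_ent_Abar_t_ctx)
qed

lemma expect_betap_incr_ghost_ent_sum:
  assumes T: "1 \<le> T"
  shows "expect (\<lambda>h. \<Sum>t=1..T. ennreal (betap_incr D d K m T h t) * ghost_ent D d K m T h (t + 1))
       = expect (\<lambda>h. (\<Sum>t\<in>{1..T-1}. ennreal (betap_incr D d K m T h t) * ennreal (played_ent D d K m T h (t + 1)))
                   + ennreal (betap_incr D d K m T h T) * ghost_ent D d K m T h (T + 1))"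
proof -
  have meas: "(\<lambda>h. ennreal (betap_incr D d K m T h t) * G h) \<in> borel_measurable histM"
    if "G \<in> borel_measurable histM" for G t
    using measurable_betap_incr that by measurable
  have tower: "expect (\<lambda>h. ennreal (betap_incr D d K m T h t) * ghost_ent D d K m T h (t + 1))
      = expect (\<lambda>h. ennreal (betap_incr D d K m T h t) * ennreal (played_ent D d K m T h (t + 1)))"
    if "t \<in> {1..T-1}" for t
    using that by (intro run_ghost_ent_tower[symmetric]) (auto simp: betap_incr_prefix)
  have split: "{1..T} = insert T {1..T-1}" "T \<notin> {1..T-1}" using T by auto
  have "expect (\<lambda>h. \<Sum>t=1..T. ennreal (betap_incr D d K m T h t) * ghost_ent D d K m T h (t + 1))
      = (\<Sum>t=1..T. expect (\<lambda>h. ennreal (betap_incr D d K m T h t) * ghost_ent D d K m T h (t + 1)))"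
    by (rule run_sum) (simp_all add: meas measurable_ghost_ent)
  also have "\<dots> = expect (\<lambda>h. ennreal (betap_incr D d K m T h T) * ghost_ent D d K m T h (T + 1))
        + (\<Sum>t\<in>{1..T-1}. expect (\<lambda>h. ennreal (betap_incr D d K m T h t) * ghost_ent D d K m T h (t + 1)))"
    using split by (simp del: run.simps)
  also have "\<dots> = expect (\<lambda>h. ennreal (betap_incr D d K m T h T) * ghost_ent D d K m T h (T + 1))
        + (\<Sum>t\<in>{1..T-1}. expect (\<lambda>h. ennreal (betap_incr D d K m T h t) * ennreal (played_ent D d K m T h (t + 1))))"
    by (simp only: sum.cong[OF refl tower])
  also have "\<dots> = expect (\<lambda>h. ennreal (betap_incr D d K m T h T) * ghost_ent D d K m T h (T + 1))
        + expect (\<lambda>h. \<Sum>t\<in>{1..T-1}. ennreal (betap_incr D d K m T h t) * ennreal (played_ent D d K m T h (t + 1)))"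
    by (subst run_sum) (simp_all add: meas measurable_played_ent_ennreal)
  also have "\<dots> = expect (\<lambda>h. ennreal (betap_incr D d K m T h T) * ghost_ent D d K m T h (T + 1)
        + (\<Sum>t\<in>{1..T-1}. ennreal (betap_incr D d K m T h t) * ennreal (played_ent D d K m T h (t + 1))))"
    by (rule run_linear[symmetric, where c=1, simplified])
       (simp_all add: meas measurable_ghost_ent measurable_played_ent_ennreal borel_measurable_sum)
  finally show ?thesis by (simp add: add.commute del: run.simps)
qed

lemma expect_played_ent_sum:
  "expect (\<lambda>h. ennreal (\<Sum>s=1..T. played_ent D d K m T h s))
   = ennreal (\<Sum>s=1..T. enn2real (expect (\<lambda>h. ghost_ent D d K m T h s)))"
proof -
  have finite: "ennreal (enn2real (expect (\<lambda>h. ghost_ent D d K m T h s))) = expect (\<lambda>h. ghost_ent D d K m T h s)"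
    for s
  proof -
    have "expect (\<lambda>h. ghost_ent D d K m T h s) \<le> expect (\<lambda>_. ennreal (max_ent D d K m T))"
      by (rule run_mono[OF ghost_ent_le[OF prob_space_D]])
    then have "expect (\<lambda>h. ghost_ent D d K m T h s) < \<top>"
      unfolding run_const[OF prob_space_D] using ennreal_less_top by (rule le_less_trans)
    then show ?thesis by (simp add: less_top)
  qed
  have "(\<lambda>h. ennreal (\<Sum>s=1..T. played_ent D d K m T h s)) = (\<lambda>h. \<Sum>s=1..T. 1 * ennreal (played_ent D d K m T h s))"
    using played_ent_bounds(1) by (simp add: sum_ennreal)
  then have "expect (\<lambda>h. ennreal (\<Sum>s=1..T. played_ent D d K m T h s))
      = (\<Sum>s=1..T. expect (\<lambda>h. 1 * ennreal (played_ent D d K m T h s)))"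
    by (simp only: run_sum[OF finite_atLeastAtMost measurable_played_ent_ennreal[THEN borel_measurable_times_ennreal[OF borel_measurable_const]]])
  also have "\<dots> = (\<Sum>s=1..T. expect (\<lambda>h. 1 * ghost_ent D d K m T h s))"
    by (intro sum.cong refl run_ghost_ent_tower) auto
  also have "\<dots> = ennreal (\<Sum>s=1..T. enn2real (expect (\<lambda>h. ghost_ent D d K m T h s)))"
    by (simp add: finite sum_ennreal[symmetric] del: run.simps)
  finally show ?thesis .
qed

lemma expect_sqrt_le:
  assumes F: "F \<in> borel_measurable histM" and nonneg: "\<And>h. 0 \<le> F h"
    and Q: "expect (\<lambda>h. ennreal (F h)) = ennreal Q" "0 < Q"
  shows "expect (\<lambda>h. ennreal (sqrt (F h))) \<le> ennreal (sqrt Q)"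
proof -
  define a where "a = sqrt Q"
  have a: "0 < a" using Q(2) by (simp add: a_def)
  have tangent: "ennreal (sqrt (F h)) \<le> ennreal (1 / (2 * a)) * ennreal (F h) + ennreal (a / 2)" for h
  proof -
    have "ennreal (sqrt (F h)) \<le> ennreal (1 / (2 * a) * F h + a / 2)"
      using sqrt_le_amgm[OF a nonneg[of h]] by (intro ennreal_leI) simp
    also have "\<dots> = ennreal (1 / (2 * a)) * ennreal (F h) + ennreal (a / 2)"
      using a nonneg[of h] by (simp add: ennreal_plus ennreal_mult[symmetric])
    finally show ?thesis .
  qed
  have "expect (\<lambda>h. ennreal (sqrt (F h)))
      \<le> expect (\<lambda>h. ennreal (1 / (2 * a)) * ennreal (F h) + ennreal (a / 2))"
    by (rule run_mono[OF tangent])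
  also have "\<dots> = ennreal (1 / (2 * a)) * ennreal Q + ennreal (a / 2)"
    using F by (subst run_linear) (simp_all add: Q(1) run_const[OF prob_space_D] del: run.simps)
  also have "\<dots> = ennreal (1 / (2 * a) * Q + a / 2)"
    using a Q(2) by (simp add: ennreal_plus ennreal_mult[symmetric])
  also have "1 / (2 * a) * Q + a / 2 = sqrt Q"
    using a Q(2) unfolding a_def by (simp add: field_simps)
  finally show ?thesis .
qed

lemma weighted_ghost_ent_le_sqrt:
  assumes T: "1 \<le> T"
  defines "c \<equiv> real m * ln (real K / real m)"
  shows "(\<Sum>t\<in>{1..T-1}. ennreal (betap_incr D d K m T h t) * ennreal (played_ent D d K m T h (t + 1)))
      + ennreal (betap_incr D d K m T h T) * ghost_ent D d K m T h (T + 1)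
    \<le> ennreal (6 * cc1 D d K m T * sqrt c) * ennreal (sqrt (\<Sum>s=1..T. played_ent D d K m T h s))"
proof -
  let ?S = "\<Sum>t\<in>{1..T-1}. betap_incr D d K m T h t * played_ent D d K m T h (t + 1)"
  have w: "0 \<le> betap_incr D d K m T h t" if "1 \<le> t" for t
    using betap_incr_nonneg[OF that ln_ratio_pos cc1_nonneg] .
  have S: "0 \<le> ?S" using w played_ent_bounds(1) by (intro sum_nonneg mult_nonneg_nonneg) auto
  have B: "0 \<le> max_ent D d K m T" using played_ent_bounds[of D d K m T h 1] by linarith
  have "(\<Sum>t\<in>{1..T-1}. ennreal (betap_incr D d K m T h t) * ennreal (played_ent D d K m T h (t + 1)))
      = ennreal ?S"
    using w played_ent_bounds(1)
    by (subst sum_ennreal[symmetric]) (auto intro!: sum.cong ennreal_mult[symmetric] mult_nonneg_nonneg)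
  then have "(\<Sum>t\<in>{1..T-1}. ennreal (betap_incr D d K m T h t) * ennreal (played_ent D d K m T h (t + 1)))
      + ennreal (betap_incr D d K m T h T) * ghost_ent D d K m T h (T + 1)
      \<le> ennreal ?S + ennreal (betap_incr D d K m T h T) * ennreal (max_ent D d K m T)"
    by (simp add: add_left_mono mult_left_mono ghost_ent_le[OF prob_space_D])
  also have "\<dots> = ennreal (?S + betap_incr D d K m T h T * max_ent D d K m T)"
    using S w[OF T] B by (simp add: ennreal_mult ennreal_plus)
  also have "\<dots> \<le> ennreal (6 * cc1 D d K m T * sqrt c * sqrt (\<Sum>s=1..T. played_ent D d K m T h s))"
    unfolding c_def by (rule ennreal_leI[OF weighted_played_ent_le[OF ln_ratio_pos T cc1_nonneg]])
  also have "\<dots> = ennreal (6 * cc1 D d K m T * sqrt c) * ennreal (sqrt (\<Sum>s=1..T. played_ent D d K m T h s))"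
    using cc1_nonneg ln_ratio_pos
    by (intro ennreal_mult) (simp_all add: c_def sum_nonneg played_ent_bounds)
  finally show ?thesis .
qed

lemma expect_weighted_ghost_ent_le:
  assumes T: "1 \<le> T"
  defines "c \<equiv> real m * ln (real K / real m)"
  shows "expect (\<lambda>h. \<integral>\<^sup>+ x. ennreal (\<Sum>t=1..T. betap_incr D d K m T h t * ent K (Abar_t D d K m T h (t + 1) x)) \<partial>D)
    \<le> ennreal (6 * cc1 D d K m T * sqrt c
         * sqrt (\<Sum>s=1..T. enn2real (expect (\<lambda>h. ghost_ent D d K m T h s))))"
proof -
  define Q where "Q = (\<Sum>s=1..T. enn2real (expect (\<lambda>h. ghost_ent D d K m T h s)))"
  have "expect (\<lambda>h. ghost_ent D d K m T h 1) = ennreal (max_ent D d K m T)"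
    by (simp only: ghost_ent_first[OF prob_space_D] run_const[OF prob_space_D])
  then have "max_ent D d K m T \<le> enn2real (expect (\<lambda>h. ghost_ent D d K m T h 1))"
    using max_ent_pos[OF K_pos m_pos, THEN less_imp_le] by simp
  also have "\<dots> \<le> Q" unfolding Q_def using T by (intro member_le_sum) auto
  finally have Q_pos: "0 < Q" by (rule less_le_trans[OF max_ent_pos[OF K_pos m_pos]])
  have "expect (\<lambda>h. \<integral>\<^sup>+ x. ennreal (\<Sum>t=1..T. betap_incr D d K m T h t * ent K (Abar_t D d K m T h (t + 1) x)) \<partial>D)
      \<le> expect (\<lambda>h. ennreal (6 * cc1 D d K m T * sqrt c) * ennreal (sqrt (\<Sum>s=1..T. played_ent D d K m T h s)))"
    unfolding ennreal_betap_incr_ghost_ent_sum expect_betap_incr_ghost_ent_sum[OF T]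
    by (rule run_mono[OF weighted_ghost_ent_le_sqrt[OF T, folded c_def]])
  also have "\<dots> = ennreal (6 * cc1 D d K m T * sqrt c) * expect (\<lambda>h. ennreal (sqrt (\<Sum>s=1..T. played_ent D d K m T h s)))"
    by (rule run_cmult) (use measurable_played_ent in measurable)
  also have "\<dots> \<le> ennreal (6 * cc1 D d K m T * sqrt c) * ennreal (sqrt Q)"
    by (intro mult_left_mono expect_sqrt_le[OF _ _ expect_played_ent_sum[folded Q_def] Q_pos])
       (use measurable_played_ent in \<open>measurable, auto intro: sum_nonneg played_ent_bounds\<close>)
  also have "\<dots> = ennreal (6 * cc1 D d K m T * sqrt c * sqrt Q)"
    using cc1_nonneg ln_ratio_pos Q_pos by (intro ennreal_mult[symmetric]) (simp_all add: c_def)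
  finally show ?thesis unfolding Q_def .
qed

end

theorem lemmaA5:
  shows "\<exists>L'>0. \<forall>(K::nat) (m::nat) (d::nat) (T::nat) (D::ctx measure) loss p.
     2 \<le> K \<longrightarrow> 1 \<le> m \<longrightarrow> m < K \<longrightarrow> 1 \<le> d \<longrightarrow> 3 \<le> T \<longrightarrow>
     context_dist d D \<longrightarrow> losses_ok d K loss \<longrightarrow> decomp_ok K m p \<longrightarrow>
     cc1 D d K m T \<ge> 1 \<longrightarrow>
     run D d K m T loss p T []
        (\<lambda>h. \<integral>\<^sup>+ x0. ennreal (\<Sum>t=1..T. (betap D d K m T h (t + 1) - betap D d K m T h t)
                                      * ent K (Abar_t D d K m T h (t + 1) x0)) \<partial>D)
     \<le> ennreal (L' * cc1 D d K m T * sqrt (real m * ln (real K / real m))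
          * sqrt (\<Sum>t=1..T. enn2real (run D d K m T loss p T []
                     (\<lambda>h. \<integral>\<^sup>+ x0. ennreal (ent K (Abar_t D d K m T h t x0)) \<partial>D))))"
proof (intro exI[of _ 6] conjI allI impI)
  fix K m d T :: nat and D :: "ctx measure" and loss p
  assume "m < K" "1 \<le> m" "3 \<le> T" "context_dist d D" "losses_ok d K loss" "decomp_ok K m p"
    "1 \<le> cc1 D d K m T"
  then interpret bandit_instance D d K m T loss p
    by unfold_locales simp_all
  show "expect (\<lambda>h. \<integral>\<^sup>+ x0. ennreal (\<Sum>t=1..T. (betap D d K m T h (t + 1) - betap D d K m T h t)
                                      * ent K (Abar_t D d K m T h (t + 1) x0)) \<partial>D)
     \<le> ennreal (6 * cc1 D d K m T * sqrt (real m * ln (real K / real m))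
          * sqrt (\<Sum>t=1..T. enn2real (expect (\<lambda>h. \<integral>\<^sup>+ x0. ennreal (ent K (Abar_t D d K m T h t x0)) \<partial>D))))"
    using expect_weighted_ghost_ent_le \<open>3 \<le> T\<close> unfolding betap_incr_def ghost_ent_def by simp
qed simp

end
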